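(* Let $\ell\in\mathbb{F}$ and let $V_{\hat{\mathfrak{g}}}(\ell,0)$ be the affine vertex algebra of level $\ell$, equipped with its $\mathbb{Z}$-grading and its $\mathcal{H}$-module structure (described in the context). Then $V_{\hat{\mathfrak{g}}}(\ell,0)$ is an $\mathcal{H}$-module vertex algebra.
   Context: $\mathbb{F}$ is an algebraically closed field of odd prime characteristic $p$. $\mathcal{H}$: let $\mathfrak{sl}_2$ over $\mathbb{C}$ have basis $L_{-1},L_0,L_1$ with $[L_1,L_{-1}]=2L_0$, $[L_0,L_{\pm1}]=\mp L_{\pm1}$; put $L_{\pm1}^{(n)}=L_{\pm1}^n/n!$, $L_0^{(n)}=\binom{-2L_0}{n}$ in $U(\mathfrak{sl}_2)$; $U(\mathfrak{sl}_2)_{\mathbb{Z}}$ is the $\mathbb{Z}$-span of the $L_{-1}^{(i)}L_0^{(j)}L_1^{(k)}$, and $\mathcal{H}=\mathbb{F}\otimes_{\mathbb{Z}}U(\mathfrak{sl}_2)_{\mathbb{Z}}$ (Hopf algebra with $\Delta(L_{\pm1}^{(n)})=\sum_iL_{\pm1}^{(n-i)}\otimes L_{\pm1}^{(i)}$, $\Delta(L_0^{(n)})=\sum_iL_0^{(n-i)}\otimes L_0^{(i)}$, $\varepsilon=\delta_{n,0}$). $e^{zL_{\pm1}}=\sum_{n\ge0}z^nL_{\pm1}^{(n)}$. For $v$ homogeneous of degree $n$, $f(z)^{\deg}v:=f(z)^nv$, extended linearly. Every vertex algebra $V$ is a module for the bialgebra $\mathcal{B}$ (basis $\mathcal{D}^{(n)}$,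 $\mathcal{D}^{(m)}\mathcal{D}^{(n)}=\binom{m+n}{n}\mathcal{D}^{(m+n)}$) via $\mathcal{D}^{(n)}v=v_{-n-1}\mathbf{1}$. A $\mathbb{Z}$-graded vertex algebra: $V=\bigoplus V_n$, $\mathbf{1}\in V_0$, $u_rV_n\subset V_{m+n-r-1}$ for $u\in V_m$. A $\mathbb{Z}$-graded weight $\mathcal{H}$-module: $W=\bigoplus W_n$ with $\mathcal{H}$-action, $L_{\pm1}^{(r)}W_n\subset W_{n\mp r}$, $L_0^{(r)}|_{W_n}=\binom{-2n}{r}$. An $\mathcal{H}$-module vertex algebra: a $\mathbb{Z}$-graded vertex algebra $V$ which is a $\mathbb{Z}$-graded weight $\mathcal{H}$-module with $L_{-1}^{(n)}=\mathcal{D}^{(n)}$, such that $V_n=0$ for $n\ll0$, $L_1^{(n)}\mathbf{1}=\delta_{n,0}\mathbf{1}$, and $e^{zL_1}Y(v,z_0)e^{-zL_1}=Y\bigl(e^{z(1-zz_0)L_1}(1-zz_0)^{-2\deg}v,z_0/(1-zz_0)\bigr)$ for all $v\in V$. Affine setting: $\mathfrak{g}$ is a Lie algebra over $\mathbb{F}$ with a symmetric invariant bilinear form $\langle\cdot,\cdot\rangle$; $\hat{\mathfrak{g}}=\mathfrak{g}\otimes\mathbb{F}[t,t^{-1}]\oplus\mathbb{F}\mathbf{k}$ with $\mathbf{k}$ central and $[a(m),b(n)]=[a,b](m+n)+m\langle a,b\rangle\delta_{m+n,0}\mathbf{k}$, where $a(n)=a\otimes t^n$. $\hat{\mathfrak{g}}$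 is an $\mathcal{H}$-module Lie algebra via $L^{(r)}_{\pm1}\mathbf{k}=L_0^{(r)}\mathbf{k}=\delta_{r,0}\mathbf{k}$, $L_{-1}^{(r)}a(n)=(-1)^r\binom{n}{r}a(n-r)$, $L_1^{(r)}a(n)=\binom{-n}{r}a(n+r)$, $L_0^{(r)}a(n)=\binom{2n}{r}a(n)$; this extends uniquely to make $U(\hat{\mathfrak{g}})$ an $\mathcal{H}$-module algebra ($b(xy)=\sum(b^{(1)}x)(b^{(2)}y)$, $b\cdot1=\varepsilon(b)1$). $V_{\hat{\mathfrak{g}}}(\ell,0)=U(\hat{\mathfrak{g}})/J_\ell$, where $J_\ell$ is the left ideal generated by $\mathfrak{g}\otimes\mathbb{F}[t]$ and $\mathbf{k}-\ell$; $J_\ell$ is an $\mathcal{H}$-submodule, so $V_{\hat{\mathfrak{g}}}(\ell,0)$ is an $\mathcal{H}$-module. It is a vertex algebra with vacuum $\mathbf{1}=1+J_\ell$ and $Y(a,x)=\sum_n a(n)x^{-n-1}$ for $a\in\mathfrak{g}$ (identified with $a(-1)\mathbf{1}$), generated by $\mathfrak{g}$; it is $\mathbb{Z}$-graded by $\deg\mathbf{1}=0$ and $\deg a(n)=-n$ (so $V_n$ is spanned by $a^{(1)}(-s_1)\cdots a^{(r)}(-s_r)\mathbf{1}$ with $s_i\ge1$, $\sum s_i=n$). *)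

theory Defs
  imports "HOL-Computational_Algebra.Polynomial"
begin

text \<open>Integer binomial coefficient mapped into the ground field (computed in Q, where it is an integer, then mapped via Z).\<close>
definition ibinom :: "int \<Rightarrow> nat \<Rightarrow> 'k::comm_ring_1" where
  "ibinom n k = of_int \<lfloor>(of_int n :: rat) gchoose k\<rfloor>"

text \<open>Sum of a finitely supported family (used where truncation makes sums finite).\<close>
definition fsum :: "(nat \<Rightarrow> 'v::comm_monoid_add) \<Rightarrow> 'v" where
  "fsum f = sum f {i. f i \<noteq> 0}"

definition alg_closed :: "'k::field itself \<Rightarrow> bool" where
  "alg_closed _ \<longleftrightarrow> (\<forall>q :: 'k poly. degree q > 0 \<longrightarrow> (\<exists>x. poly q x = 0))"

definition lie_alg_form ::
  "('k::field \<Rightarrow> 'g::ab_group_add \<Rightarrow> 'g) \<Rightarrow> ('g \<Rightarrow> 'g \<Rightarrow> 'g) \<Rightarrow> ('g \<Rightarrow> 'g \<Rightarrow> 'k) \<Rightarrow> bool" where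
  "lie_alg_form scg br fm \<longleftrightarrow> module scg \<and>
     (\<forall>a b c. br (a + b) c = br a c + br b c) \<and>
     (\<forall>k a b. br (scg k a) b = scg k (br a b)) \<and>
     (\<forall>a. br a a = 0) \<and>
     (\<forall>a b c. br a (br b c) + br b (br c a) + br c (br a b) = 0) \<and>
     (\<forall>a b. fm a b = fm b a) \<and>
     (\<forall>a b c. fm (a + b) c = fm a c + fm b c) \<and>
     (\<forall>k a b. fm (scg k a) b = k * fm a b) \<and>
     (\<forall>a b c. fm (br a b) c = fm a (br b c))"

text \<open>rho a n x is the action of a(n) = a \<otimes> t^n; the central element k acts as ell.
  The module is given by a carrier C with addition add and scaling scl.\<close>
definition aff_rep ::
  "('k::field \<Rightarrow> 'g::ab_group_add \<Rightarrow> 'g) \<Rightarrow> ('g \<Rightarrow> 'g \<Rightarrow> 'g) \<Rightarrow> ('g \<Rightarrow> 'g \<Rightarrow> 'k) \<Rightarrow> 'k \<Rightarrow>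
   'w set \<Rightarrow> ('w \<Rightarrow> 'w \<Rightarrow> 'w) \<Rightarrow> ('k \<Rightarrow> 'w \<Rightarrow> 'w) \<Rightarrow> ('g \<Rightarrow> int \<Rightarrow> 'w \<Rightarrow> 'w) \<Rightarrow> bool" where
  "aff_rep scg br fm ell C add scl rho \<longleftrightarrow>
     (\<forall>a n x. x \<in> C \<longrightarrow> rho a n x \<in> C) \<and>
     (\<forall>a b n x. x \<in> C \<longrightarrow> rho (a + b) n x = add (rho a n x) (rho b n x)) \<and>
     (\<forall>k a n x. x \<in> C \<longrightarrow> rho (scg k a) n x = scl k (rho a n x)) \<and>
     (\<forall>a n x y. x \<in> C \<longrightarrow> y \<in> C \<longrightarrow> rho a n (add x y) = add (rho a n x) (rho a n y)) \<and>
     (\<forall>a n k x. x \<in> C \<longrightarrow> rho a n (scl k x) = scl k (rho a n x)) \<and>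
     (\<forall>a b m n x. x \<in> C \<longrightarrow>
        rho a m (rho b n x) =
          add (rho b n (rho a m x))
              (add (rho (br a b) (m + n) x)
                   (scl (of_int m * (if m + n = 0 then fm a b else 0) * ell) x)))"

inductive generated_by_vac ::
  "('k \<Rightarrow> 'v::ab_group_add \<Rightarrow> 'v) \<Rightarrow> ('g \<Rightarrow> int \<Rightarrow> 'v \<Rightarrow> 'v) \<Rightarrow> 'v \<Rightarrow> 'v \<Rightarrow> bool"
  for sc rho one where
  gen_one: "generated_by_vac sc rho one one"
| gen_add: "generated_by_vac sc rho one x \<Longrightarrow> generated_by_vac sc rho one y \<Longrightarrow>
            generated_by_vac sc rho one (x + y)"
| gen_scale: "generated_by_vac sc rho one x \<Longrightarrow> generated_by_vac sc rho one (sc k x)"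
| gen_act: "generated_by_vac sc rho one x \<Longrightarrow> generated_by_vac sc rho one (rho a n x)"

text \<open>(V, rho, one) is the vacuum module V(ell,0) = U(g^)/J_ell: a level-ell module,
  generated by one, with one killed by g \<otimes> F[t], and universal among such
  (universality tested against all such modules realised as subspaces of the big
  vector space of functions on words; V(ell,0) itself embeds there).\<close>
definition affine_vacuum_module ::
  "('k::field \<Rightarrow> 'g::ab_group_add \<Rightarrow> 'g) \<Rightarrow> ('g \<Rightarrow> 'g \<Rightarrow> 'g) \<Rightarrow> ('g \<Rightarrow> 'g \<Rightarrow> 'k) \<Rightarrow> 'k \<Rightarrow>
   ('k \<Rightarrow> 'v::ab_group_add \<Rightarrow> 'v) \<Rightarrow> ('g \<Rightarrow> int \<Rightarrow> 'v \<Rightarrow> 'v) \<Rightarrow> 'v \<Rightarrow> bool" where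
  "affine_vacuum_module scg br fm ell sc rho one \<longleftrightarrow>
     module sc \<and>
     aff_rep scg br fm ell UNIV (+) sc rho \<and>
     (\<forall>a n. n \<ge> 0 \<longrightarrow> rho a n one = 0) \<and>
     (\<forall>v. generated_by_vac sc rho one v) \<and>
     (\<forall>(W :: (('g \<times> int) list \<Rightarrow> 'k) set) rhoW w.
        ((\<lambda>i. 0) \<in> W \<and> (\<forall>x\<in>W. \<forall>y\<in>W. (\<lambda>i. x i + y i) \<in> W) \<and>
         (\<forall>k. \<forall>x\<in>W. (\<lambda>i. k * x i) \<in> W) \<and>
         aff_rep scg br fm ell W (\<lambda>x y i. x i + y i) (\<lambda>k x i. k * x i) rhoW \<and>
         w \<in> W \<and> (\<forall>a n. n \<ge> 0 \<longrightarrow> rhoW a n w = (\<lambda>i. 0)))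
        \<longrightarrow> (\<exists>f. (\<forall>v. f v \<in> W) \<and> (\<forall>u v. f (u + v) = (\<lambda>i. f u i + f v i)) \<and>
                 (\<forall>k v. f (sc k v) = (\<lambda>i. k * f v i)) \<and> f one = w \<and>
                 (\<forall>a n v. f (rho a n v) = rhoW a n (f v))))"

inductive homog ::
  "('k \<Rightarrow> 'v::ab_group_add \<Rightarrow> 'v) \<Rightarrow> ('g \<Rightarrow> int \<Rightarrow> 'v \<Rightarrow> 'v) \<Rightarrow> 'v \<Rightarrow> int \<Rightarrow> 'v \<Rightarrow> bool"
  for sc rho one where
  homog_one: "homog sc rho one 0 one"
| homog_zero: "homog sc rho one d 0"
| homog_add: "homog sc rho one d x \<Longrightarrow> homog sc rho one d y \<Longrightarrow> homog sc rho one d (x + y)"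
| homog_scale: "homog sc rho one d x \<Longrightarrow> homog sc rho one d (sc k x)"
| homog_act: "homog sc rho one d x \<Longrightarrow> s \<ge> 1 \<Longrightarrow> homog sc rho one (d + s) (rho a (- s) x)"

text \<open>Lm r, L0 r, L1 r are the actions of L_{-1}^{(r)}, L_0^{(r)}, L_1^{(r)}; they are
  determined by b.1 = eps(b) 1 and b(xy) = sum (b1 x)(b2 y) with the coproduct.\<close>
definition H_action_induced ::
  "('k::field \<Rightarrow> 'v::ab_group_add \<Rightarrow> 'v) \<Rightarrow> ('g \<Rightarrow> int \<Rightarrow> 'v \<Rightarrow> 'v) \<Rightarrow> 'v \<Rightarrow>
   (nat \<Rightarrow> 'v \<Rightarrow> 'v) \<Rightarrow> (nat \<Rightarrow> 'v \<Rightarrow> 'v) \<Rightarrow> (nat \<Rightarrow> 'v \<Rightarrow> 'v) \<Rightarrow> bool" where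
  "H_action_induced sc rho one Lm L0 L1 \<longleftrightarrow>
     (\<forall>L \<in> {Lm, L0, L1}. \<forall>r u v k.
        L r (u + v) = L r u + L r v \<and> L r (sc k v) = sc k (L r v) \<and>
        L r one = (if r = 0 then one else 0)) \<and>
     (\<forall>r a n v. Lm r (rho a n v) =
        (\<Sum>i\<le>r. sc ((-1) ^ i * ibinom n i) (rho a (n - int i) (Lm (r - i) v)))) \<and>
     (\<forall>r a n v. L0 r (rho a n v) =
        (\<Sum>i\<le>r. sc (ibinom (2 * n) i) (rho a n (L0 (r - i) v)))) \<and>
     (\<forall>r a n v. L1 r (rho a n v) =
        (\<Sum>i\<le>r. sc (ibinom (- n) i) (rho a (n + int i) (L1 (r - i) v))))"

text \<open>Y u n w = u_n w. Vertex algebra over a field: bilinearity, truncation,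
  vacuum, creation, and the Borcherds (Jacobi) identity in component form.\<close>
definition vertex_algebra ::
  "('k::field \<Rightarrow> 'v::ab_group_add \<Rightarrow> 'v) \<Rightarrow> ('v \<Rightarrow> int \<Rightarrow> 'v \<Rightarrow> 'v) \<Rightarrow> 'v \<Rightarrow> bool" where
  "vertex_algebra sc Y one \<longleftrightarrow> module sc \<and>
     (\<forall>u n v w. Y u n (v + w) = Y u n v + Y u n w) \<and>
     (\<forall>u n k w. Y u n (sc k w) = sc k (Y u n w)) \<and>
     (\<forall>u v n w. Y (u + v) n w = Y u n w + Y v n w) \<and>
     (\<forall>k u n w. Y (sc k u) n w = sc k (Y u n w)) \<and>
     (\<forall>u w. \<exists>N. \<forall>n\<ge>N. Y u n w = 0) \<and>
     (\<forall>n w. Y one n w = (if n = -1 then w else 0)) \<and>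
     (\<forall>u n. n \<ge> 0 \<longrightarrow> Y u n one = 0) \<and>
     (\<forall>u. Y u (-1) one = u) \<and>
     (\<forall>u v w l m n.
        fsum (\<lambda>i. sc (ibinom m i) (Y (Y u (l + int i) v) (m + n - int i) w)) =
        fsum (\<lambda>i. sc ((-1) ^ i * ibinom l i)
                   (Y u (l + m - int i) (Y v (n + int i) w)
                    - sc (if even l then 1 else -1) (Y v (l + n - int i) (Y u (m + int i) w)))))"

definition graded_direct ::
  "('k::field \<Rightarrow> 'v::ab_group_add \<Rightarrow> 'v) \<Rightarrow> (int \<Rightarrow> 'v set) \<Rightarrow> bool" where
  "graded_direct sc Vn \<longleftrightarrow>
     (\<forall>n. 0 \<in> Vn n \<and> (\<forall>x\<in>Vn n. \<forall>y\<in>Vn n. x + y \<in> Vn n) \<and> (\<forall>k. \<forall>x\<in>Vn n. sc k x \<in> Vn n)) \<and>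
     (\<forall>v. \<exists>S c. finite S \<and> (\<forall>n\<in>S. c n \<in> Vn n) \<and> v = (\<Sum>n\<in>S. c n)) \<and>
     (\<forall>S c. finite S \<longrightarrow> (\<forall>n\<in>S. c n \<in> Vn n) \<longrightarrow> (\<Sum>n\<in>S. c n) = 0 \<longrightarrow> (\<forall>n\<in>S. c n = 0))"

definition Z_graded_VA ::
  "('k::field \<Rightarrow> 'v::ab_group_add \<Rightarrow> 'v) \<Rightarrow> ('v \<Rightarrow> int \<Rightarrow> 'v \<Rightarrow> 'v) \<Rightarrow> 'v \<Rightarrow> (int \<Rightarrow> 'v set) \<Rightarrow> bool" where
  "Z_graded_VA sc Y one Vn \<longleftrightarrow> vertex_algebra sc Y one \<and> graded_direct sc Vn \<and> one \<in> Vn 0 \<and>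
     (\<forall>u v m n r. u \<in> Vn m \<longrightarrow> v \<in> Vn n \<longrightarrow> Y u r v \<in> Vn (m + n - r - 1))"

definition graded_weight_H ::
  "('k::field \<Rightarrow> 'v::ab_group_add \<Rightarrow> 'v) \<Rightarrow> (int \<Rightarrow> 'v set) \<Rightarrow>
   (nat \<Rightarrow> 'v \<Rightarrow> 'v) \<Rightarrow> (nat \<Rightarrow> 'v \<Rightarrow> 'v) \<Rightarrow> (nat \<Rightarrow> 'v \<Rightarrow> 'v) \<Rightarrow> bool" where
  "graded_weight_H sc Vn Lm L0 L1 \<longleftrightarrow> graded_direct sc Vn \<and>
     (\<forall>r n v. v \<in> Vn n \<longrightarrow>
        Lm r v \<in> Vn (n + int r) \<and> L1 r v \<in> Vn (n - int r) \<and>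
        L0 r v = sc (ibinom (- 2 * n) r) v)"

text \<open>The conjugation formula, compared coefficientwise: coefficient of z^a z0^b
  for homogeneous v of degree d (both sides are finite sums), where
  z0/(1 - z z0) and (1 - z z0)^N are expanded in nonnegative powers of z.\<close>
definition H_module_VA ::
  "('k::field \<Rightarrow> 'v::ab_group_add \<Rightarrow> 'v) \<Rightarrow> ('v \<Rightarrow> int \<Rightarrow> 'v \<Rightarrow> 'v) \<Rightarrow> 'v \<Rightarrow> (int \<Rightarrow> 'v set) \<Rightarrow>
   (nat \<Rightarrow> 'v \<Rightarrow> 'v) \<Rightarrow> (nat \<Rightarrow> 'v \<Rightarrow> 'v) \<Rightarrow> (nat \<Rightarrow> 'v \<Rightarrow> 'v) \<Rightarrow> bool" where
  "H_module_VA sc Y one Vn Lm L0 L1 \<longleftrightarrow>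
     Z_graded_VA sc Y one Vn \<and> graded_weight_H sc Vn Lm L0 L1 \<and>
     (\<forall>r v. Lm r v = Y v (- int r - 1) one) \<and>
     (\<exists>N. \<forall>n<N. Vn n = {0}) \<and>
     (\<forall>r. L1 r one = (if r = 0 then one else 0)) \<and>
     (\<forall>d v w a b. v \<in> Vn d \<longrightarrow>
        (\<Sum>k\<le>a. sc ((-1) ^ k) (L1 (a - k) (Y v (- b - 1) (L1 k w)))) =
        (\<Sum>k\<le>a. sc ((-1) ^ (a - k) * ibinom (int k - 2 * d + (int a - int k - b - 1) + 1) (a - k))
                    (Y (L1 k v) (int a - int k - b - 1) w)))"

end

theory Submission
  imports Defs "HOL-Computational_Algebra.Formal_Power_Series"
begin

text \<open>
  Every vector of \<open>V(\<ell>,0)\<close> is obtained from the vacuum by the operators \<open>a(n)\<close>, so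
  all claims are proved by induction along this generation, using the prescribed action of
  \<open>L_{\<plusminus>1}^{(r)}\<close> and \<open>L_0^{(r)}\<close> on \<open>a(n)\<close>. On the span \<open>V_d\<close> of monomials of degree
  \<open>d\<close> the operator \<open>L_0^{(r)}\<close> is the scalar \<open>binom(-2d, r)\<close>; as sequences in \<open>r\<close> these
  scalars separate integers even in characteristic \<open>p\<close>, which makes the grading direct.
  The Borcherds identity with one argument the generator \<open>a(-1)1\<close> yields the commutator
  and associator formulas for \<open>a(p)\<close> and \<open>Y(v,n)\<close>. With them \<open>L_1^{(a)} Y(v,n) w\<close> is
  computed by induction on \<open>w\<close>, and the conjugation formula follows from
  \<open>L_1^{(r)} L_1^{(s)} = binom(r+s, r) L_1^{(r+s)}\<close> and an alternating binomial sum.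
  The underlying binomial identities are proved over \<open>\<int>\<close> and mapped into the field.
\<close>

section \<open>Integer binomial coefficients\<close>

definition zbinom :: "int \<Rightarrow> nat \<Rightarrow> int" where
  "zbinom x k = \<lfloor>(of_int x :: rat) gchoose k\<rfloor>"

lemma of_int_zbinom: "(of_int (zbinom x k) :: rat) = of_int x gchoose k"
  unfolding zbinom_def by (simp flip: of_int_gbinomial)

lemma ibinom_conv_zbinom: "ibinom x k = of_int (zbinom x k)"
  unfolding ibinom_def zbinom_def ..

lemma zbinom_Vandermonde: "(\<Sum>k\<le>n. zbinom a k * zbinom b (n - k)) = zbinom (a + b) n"
  using gbinomial_Vandermonde[of "of_int a :: rat" "of_int b" n]
  by (intro of_int_eq_iff[where 'a=rat, THEN iffD1]) (simp add: of_int_zbinom atLeast0AtMost)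

lemma zbinom_trinomial_revision:
  "k \<le> m \<Longrightarrow> zbinom a m * zbinom (int m) k = zbinom a k * zbinom (a - int k) (m - k)"
  using gbinomial_trinomial_revision[of k m "of_int a :: rat"]
  by (intro of_int_eq_iff[where 'a=rat, THEN iffD1]) (simp add: of_int_zbinom)

lemma zbinom_of_nat: "zbinom (int m) k = int (m choose k)"
  by (intro of_int_eq_iff[where 'a=rat, THEN iffD1]) (simp add: of_int_zbinom binomial_gbinomial)

lemma zbinom_of_nat_symmetric: "k \<le> m \<Longrightarrow> zbinom (int m) k = zbinom (int m) (m - k)"
  by (simp add: zbinom_of_nat binomial_symmetric[symmetric])

lemma zbinom_of_nat_eq_0: "m < k \<Longrightarrow> zbinom (int m) k = 0"
  by (simp add: zbinom_of_nat)

lemma zbinom_0_right [simp]: "zbinom a 0 = 1"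
  by (intro of_int_eq_iff[where 'a=rat, THEN iffD1]) (simp add: of_int_zbinom)

lemma zbinom_negated_upper: "(-1)^k * zbinom a k = zbinom (int k - a - 1) k"
  using gbinomial_negated_upper[of "of_int a :: rat" k]
  by (intro of_int_eq_iff[where 'a=rat, THEN iffD1]) (simp add: of_int_zbinom)

lemma zbinom_0_left: "zbinom 0 k = (if k = 0 then 1 else 0)"
  by (intro of_int_eq_iff[where 'a=rat, THEN iffD1]) (simp add: of_int_zbinom gbinomial_0_left)

lemma ibinom_0_left: "ibinom 0 k = (if k = 0 then 1 else 0)"
  by (simp add: ibinom_conv_zbinom zbinom_0_left)

lemma ibinom_0_right [simp]: "ibinom a 0 = 1"
  by (simp add: ibinom_conv_zbinom)

lemma ibinom_Vandermonde: "(\<Sum>k\<le>n. ibinom a k * ibinom b (n - k)) = ibinom (a + b) n"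
  unfolding ibinom_conv_zbinom zbinom_Vandermonde[symmetric] by simp

lemma ibinom_negated_upper: "(-1)^k * ibinom a k = ibinom (int k - a - 1) k"
  unfolding ibinom_conv_zbinom zbinom_negated_upper[symmetric] by simp

text \<open>If the two sequences agreed, Vandermonde's identity would force \<open>binom(x-y, r) = 0\<close>
  in the field for all \<open>r > 0\<close>, but \<open>binom(x-y, x-y) = 1\<close>.\<close>
lemma ibinom_sequences_differ:
  fixes x y :: int
  assumes eq: "\<forall>r. (ibinom x r :: 'k::field) = ibinom y r" and lt: "y < x"
  shows False
proof -
  define d where "d = x - y"
  have vand: "(ibinom x r :: 'k) = (\<Sum>i\<le>r. ibinom d i * ibinom y (r - i))" for r
    unfolding d_def ibinom_Vandermonde by simp
  have vanish: "(ibinom d (Suc r) :: 'k) = 0" for r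
  proof (induction r rule: less_induct)
    case (less r)
    have "(ibinom x (Suc r) :: 'k) = ibinom d 0 * ibinom y (Suc r) + (\<Sum>i\<le>r. ibinom d (Suc i) * ibinom y (r - i))"
      unfolding vand by (simp only: sum.atMost_Suc_shift) simp
    then have "(\<Sum>i\<le>r. (ibinom d (Suc i) :: 'k) * ibinom y (r - i)) = 0"
      using eq by simp
    moreover have "(\<Sum>i\<le>r. (ibinom d (Suc i) :: 'k) * ibinom y (r - i)) = ibinom d (Suc r)"
      using less by (simp add: lessThan_Suc_atMost[symmetric])
    ultimately show ?case by simp
  qed
  define r where "r = nat (d - 1)"
  have "d = int (Suc r)"
    using lt unfolding r_def d_def by simp
  then have "(ibinom d (Suc r) :: 'k) = 1"
    by (simp only: ibinom_conv_zbinom zbinom_of_nat) simp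
  with vanish[of r] show False by simp
qed

lemma ibinom_sequence_inj:
  "\<forall>r. (ibinom x r :: 'k::field) = ibinom y r \<Longrightarrow> x = y"
  using ibinom_sequences_differ[of x y] ibinom_sequences_differ[of y x]
  by (metis linorder_neqE)


section \<open>Reindexing finite sums\<close>

lemma sum_triangle_Sigma:
  "(\<Sum>i\<le>N. \<Sum>j\<le>N-i. g i j) = (\<Sum>(i,j)\<in>{(i,j). i+j \<le> (N::nat)}. g i j)"
proof -
  have "{(i,j). i+j \<le> N} = Sigma {..N} (\<lambda>i. {..N-i})"
    by auto
  then show ?thesis
    by (simp add: sum.Sigma)
qed

lemma sum_triangle_antidiagonal:
  "(\<Sum>j\<le>N. \<Sum>l\<le>N-j. F j l) = (\<Sum>m\<le>(N::nat). \<Sum>j\<le>m. F j (m-j))"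
  by (simp add: sum_triangle_Sigma sum.triangle_reindex_eq)

lemma sum_triangle_swap:
  "(\<Sum>q\<le>N. \<Sum>r\<le>q. f q r) = (\<Sum>r\<le>(N::nat). \<Sum>s\<le>N-r. f (r+s) r)"
proof -
  have "(\<Sum>r\<le>N. \<Sum>s\<le>N-r. f (r+s) r) = (\<Sum>k\<le>N. \<Sum>i\<le>k. f (i + (k - i)) i)"
    by (simp add: sum_triangle_Sigma sum.triangle_reindex_eq)
  also have "\<dots> = (\<Sum>q\<le>N. \<Sum>r\<le>q. f q r)"
    by (intro sum.cong refl) auto
  finally show ?thesis ..
qed

lemma sum_atMost_shift_if:
  "(\<Sum>q\<le>J. (if r \<le> q then h (q - r) else 0)) = (if r \<le> (J::nat) then (\<Sum>s\<le>J-r. h s) else 0)"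
proof (cases "r \<le> J")
  case True
  have "(\<Sum>q\<le>J. (if r \<le> q then h (q - r) else 0)) = (\<Sum>q\<in>{r..J}. h (q - r))"
    by (rule sum.mono_neutral_cong_right) auto
  also have "\<dots> = (\<Sum>s\<le>J-r. h s)"
    using True by (intro sum.reindex_bij_witness[where i="\<lambda>s. s + r" and j="\<lambda>q. q - r"]) auto
  finally show ?thesis
    using True by simp
qed auto

lemma sum_atMost_if_le: "(\<Sum>r\<le>(I::nat). (if r \<le> J then f r else 0)) = (\<Sum>r\<le>min I J. f r)"
  by (rule sum.mono_neutral_cong_right) auto

lemma sum_atMost_only_last: "(\<And>j. j < m \<Longrightarrow> f j = 0) \<Longrightarrow> (\<Sum>j\<le>(m::nat). f j) = f m"
  by (subst sum.mono_neutral_right[of "{..m}" "{m}"]) auto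

lemma sum_atMost_reverse: "(\<Sum>k\<le>(a::nat). f k) = (\<Sum>j\<le>a. f (a - j))"
  by (rule sum.reindex_bij_witness[where i="\<lambda>j. a - j" and j="\<lambda>k. a - k"]) auto

lemma sum_box_antidiagonal:
  fixes r s :: nat
  shows "(\<Sum>i\<le>s. \<Sum>j\<le>r. F i j) = (\<Sum>t\<le>r+s. \<Sum>i\<in>{i. i \<le> s \<and> i \<le> t \<and> t-i \<le> r}. F i (t-i))"
proof -
  have "(\<Sum>i\<le>s. \<Sum>j\<le>r. F i j) = (\<Sum>(i,j)\<in>{..s}\<times>{..r}. F i j)"
    by (simp add: sum.cartesian_product)
  also have "\<dots> = (\<Sum>(t,i)\<in>Sigma {..r+s} (\<lambda>t. {i. i \<le> s \<and> i \<le> t \<and> t-i \<le> r}). F i (t-i))"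
    by (rule sum.reindex_bij_witness[where i="\<lambda>(t,i). (i, t-i)" and j="\<lambda>(i,j). (i+j, i)"]) auto
  also have "\<dots> = (\<Sum>t\<le>r+s. \<Sum>i\<in>{i. i \<le> s \<and> i \<le> t \<and> t-i \<le> r}. F i (t-i))"
    by (rule sum.Sigma[symmetric]) auto
  finally show ?thesis .
qed

lemma sum_shear_left:
  fixes r a :: nat
  shows "(\<Sum>i\<le>r. \<Sum>q\<le>a. \<Sum>j\<le>min (a-q) (r-i). F i q j) =
    (\<Sum>\<alpha>\<le>r. \<Sum>\<beta>\<le>a. \<Sum>j\<le>min \<alpha> \<beta>. F (\<alpha>-j) (\<beta>-j) j)"
proof -
  have "(\<Sum>i\<le>r. \<Sum>q\<le>a. \<Sum>j\<le>min (a-q) (r-i). F i q j) =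
      (\<Sum>(i,q,j)\<in>Sigma {..r} (\<lambda>i. Sigma {..a} (\<lambda>q. {..min (a-q) (r-i)})). F i q j)"
    by (simp add: sum.Sigma)
  also have "\<dots> = (\<Sum>(\<alpha>,\<beta>,j)\<in>Sigma {..r} (\<lambda>\<alpha>. Sigma {..a} (\<lambda>\<beta>. {..min \<alpha> \<beta>})). F (\<alpha>-j) (\<beta>-j) j)"
    by (rule sum.reindex_bij_witness[where i="\<lambda>(\<alpha>,\<beta>,j). (\<alpha>-j, \<beta>-j, j)"
          and j="\<lambda>(i,q,j). (i+j, q+j, j)"]) auto
  also have "\<dots> = (\<Sum>\<alpha>\<le>r. \<Sum>\<beta>\<le>a. \<Sum>j\<le>min \<alpha> \<beta>. F (\<alpha>-j) (\<beta>-j) j)"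
    by (simp add: sum.Sigma)
  finally show ?thesis .
qed

lemma sum_shear_right:
  fixes r a :: nat
  shows "(\<Sum>j\<le>min a r. \<Sum>q\<le>a-j. \<Sum>i\<le>r-j. F i q j) =
    (\<Sum>\<alpha>\<le>r. \<Sum>\<beta>\<le>a. \<Sum>j\<le>min \<alpha> \<beta>. F (\<alpha>-j) (\<beta>-j) j)"
proof -
  have "(\<Sum>j\<le>min a r. \<Sum>q\<le>a-j. \<Sum>i\<le>r-j. F i q j) =
      (\<Sum>(j,q,i)\<in>Sigma {..min a r} (\<lambda>j. Sigma {..a-j} (\<lambda>q. {..r-j})). F i q j)"
    by (simp add: sum.Sigma)
  also have "\<dots> = (\<Sum>(\<alpha>,\<beta>,j)\<in>Sigma {..r} (\<lambda>\<alpha>. Sigma {..a} (\<lambda>\<beta>. {..min \<alpha> \<beta>})). F (\<alpha>-j) (\<beta>-j) j)"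
    by (rule sum.reindex_bij_witness[where i="\<lambda>(\<alpha>,\<beta>,j). (j, \<beta>-j, \<alpha>-j)"
          and j="\<lambda>(j,q,i). (i+j, q+j, j)"]) auto
  also have "\<dots> = (\<Sum>\<alpha>\<le>r. \<Sum>\<beta>\<le>a. \<Sum>j\<le>min \<alpha> \<beta>. F (\<alpha>-j) (\<beta>-j) j)"
    by (simp add: sum.Sigma)
  finally show ?thesis .
qed

lemma sum_simplex_rotate:
  fixes a :: nat
  shows "(\<Sum>q\<le>a. \<Sum>k\<le>a-q. \<Sum>j\<le>a-q-k. F q k j) = (\<Sum>k\<le>a. \<Sum>j\<le>a-k. \<Sum>q\<le>a-k-j. F q k j)"
proof -
  have "(\<Sum>q\<le>a. \<Sum>k\<le>a-q. \<Sum>j\<le>a-q-k. F q k j) =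
      (\<Sum>(q,k,j)\<in>Sigma {..a} (\<lambda>q. Sigma {..a-q} (\<lambda>k. {..a-q-k})). F q k j)"
    by (simp add: sum.Sigma)
  also have "\<dots> = (\<Sum>(k,j,q)\<in>Sigma {..a} (\<lambda>k. Sigma {..a-k} (\<lambda>j. {..a-k-j})). F q k j)"
    by (rule sum.reindex_bij_witness[where i="\<lambda>(k,j,q). (q,k,j)" and j="\<lambda>(q,k,j). (k,j,q)"]) auto
  also have "\<dots> = (\<Sum>k\<le>a. \<Sum>j\<le>a-k. \<Sum>q\<le>a-k-j. F q k j)"
    by (simp add: sum.Sigma)
  finally show ?thesis .
qed

lemma sum_simplex_shift_left:
  fixes a D :: nat
  shows "(\<Sum>i\<le>D. \<Sum>k\<le>a. \<Sum>j\<le>a-k. \<Sum>q\<le>k. F i k j q) =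
    (\<Sum>I\<le>D+a. \<Sum>K\<le>a. \<Sum>T\<le>a-K. \<Sum>q\<in>{q. q \<le> a-K-T \<and> q \<le> I \<and> I-q \<le> D}. F (I-q) (K+q) (a-K-T-q) q)"
proof -
  have "(\<Sum>i\<le>D. \<Sum>k\<le>a. \<Sum>j\<le>a-k. \<Sum>q\<le>k. F i k j q) =
      (\<Sum>(i,k,j,q)\<in>Sigma {..D} (\<lambda>i. Sigma {..a} (\<lambda>k. Sigma {..a-k} (\<lambda>j. {..k}))). F i k j q)"
    by (simp add: sum.Sigma)
  also have "\<dots> = (\<Sum>(I,K,T,q)\<in>Sigma {..D+a} (\<lambda>I. Sigma {..a} (\<lambda>K. Sigma {..a-K}
      (\<lambda>T. {q. q \<le> a-K-T \<and> q \<le> I \<and> I-q \<le> D}))). F (I-q) (K+q) (a-K-T-q) q)"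
    by (rule sum.reindex_bij_witness[where i="\<lambda>(I,K,T,q). (I-q, K+q, a-K-T-q, q)"
          and j="\<lambda>(i,k,j,q). (i+q, k-q, a-k-j, q)"]) auto
  also have "\<dots> = (\<Sum>I\<le>D+a. \<Sum>K\<le>a. \<Sum>T\<le>a-K. \<Sum>q\<in>{q. q \<le> a-K-T \<and> q \<le> I \<and> I-q \<le> D}.
      F (I-q) (K+q) (a-K-T-q) q)"
    by (simp add: sum.Sigma)
  finally show ?thesis .
qed

lemma sum_simplex_shift_right:
  fixes a E :: nat
  shows "(\<Sum>k\<le>a. \<Sum>j\<le>a-k. \<Sum>q\<le>a-k-j. \<Sum>i\<le>E. F k j q i) =
    (\<Sum>I\<le>E. \<Sum>K\<le>a. \<Sum>T\<le>a-K. \<Sum>q\<le>a-K-T. F K (a-K-T-q) q I)"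
proof -
  have "(\<Sum>k\<le>a. \<Sum>j\<le>a-k. \<Sum>q\<le>a-k-j. \<Sum>i\<le>E. F k j q i) =
      (\<Sum>(k,j,q,i)\<in>Sigma {..a} (\<lambda>k. Sigma {..a-k} (\<lambda>j. Sigma {..a-k-j} (\<lambda>q. {..E}))). F k j q i)"
    by (simp add: sum.Sigma)
  also have "\<dots> = (\<Sum>(I,K,T,q)\<in>Sigma {..E} (\<lambda>I. Sigma {..a} (\<lambda>K. Sigma {..a-K} (\<lambda>T. {..a-K-T}))).
      F K (a-K-T-q) q I)"
    by (rule sum.reindex_bij_witness[where i="\<lambda>(I,K,T,q). (K, a-K-T-q, q, I)"
          and j="\<lambda>(k,j,q,i). (i, k, a-k-j-q, q)"]) auto
  also have "\<dots> = (\<Sum>I\<le>E. \<Sum>K\<le>a. \<Sum>T\<le>a-K. \<Sum>q\<le>a-K-T. F K (a-K-T-q) q I)"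
    by (simp add: sum.Sigma)
  finally show ?thesis .
qed

lemma fsum_eq_sum: "finite A \<Longrightarrow> (\<And>i. i \<notin> A \<Longrightarrow> f i = 0) \<Longrightarrow> fsum f = sum f A"
  unfolding fsum_def by (rule sum.mono_neutral_cong_left) auto

lemma fsum_eq_first: "(\<And>i. i \<noteq> 0 \<Longrightarrow> f i = 0) \<Longrightarrow> fsum f = f 0"
  using fsum_eq_sum[of "{0}" f] by auto

section \<open>Binomial identities\<close>

lemma zbinom_kernel_expansion_left:
  fixes i q :: nat and p :: int
  shows   "zbinom p i * zbinom (int i - p) q =
      (\<Sum>l\<le>min i q. zbinom p (i-l) * zbinom (-p) (q-l) * zbinom (p - int i + int l) l)"
proof -
  have "(\<Sum>l\<le>min i q. zbinom p (i-l) * zbinom (-p) (q-l) * zbinom (p - int i + int l) l)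
      = (\<Sum>l\<le>min i q. zbinom p i * (zbinom (int i) l * zbinom (-p) (q-l)))"
  proof (rule sum.cong[OF refl])
    fix l assume "l \<in> {..min i q}"
    then have li: "l \<le> i" by simp
    have t: "zbinom p i * zbinom (int i) (i-l) = zbinom p (i-l) * zbinom (p - int (i-l)) (i - (i-l))"
      using zbinom_trinomial_revision[where k="i-l" and m=i and a=p] li by simp
    have e: "zbinom (int i) (i-l) = zbinom (int i) l" "i - (i-l) = l" "p - int (i-l) = p - int i + int l"
      using zbinom_of_nat_symmetric[of l i] li by auto
    show "zbinom p (i-l) * zbinom (-p) (q-l) * zbinom (p - int i + int l) l =
        zbinom p i * (zbinom (int i) l * zbinom (-p) (q-l))"
      using t unfolding e by (simp add: mult_ac)
  qed
  also have "\<dots> = zbinom p i * (\<Sum>l\<le>min i q. zbinom (int i) l * zbinom (-p) (q-l))"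
    by (simp add: sum_distrib_left)
  also have "(\<Sum>l\<le>min i q. zbinom (int i) l * zbinom (-p) (q-l)) =
      (\<Sum>l\<le>q. zbinom (int i) l * zbinom (-p) (q-l))"
    by (rule sum.mono_neutral_left) (auto simp: zbinom_of_nat_eq_0)
  also have "\<dots> =
      zbinom (int i - p) q" using zbinom_Vandermonde[where n=q and a="int i" and b="-p"] by simp
  finally show ?thesis by simp
qed

lemma zbinom_kernel_expansion_right:
  fixes i q :: nat and p :: int
  shows   "zbinom (-p) q * zbinom (p + int q) i =
      (\<Sum>l\<le>min i q. zbinom p (i-l) * zbinom (-p) (q-l) * zbinom (-p - int (q-l)) l)"
proof -
  have v: "zbinom (p + int q) i = (\<Sum>l\<le>i. zbinom (int q) l * zbinom p (i-l))"
    using zbinom_Vandermonde[where n=i and a="int q" and b=p] by (simp add: add.commute)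
  have "zbinom (-p) q * zbinom (p + int q) i =
      (\<Sum>l\<le>i. zbinom p (i-l) * (zbinom (-p) q * zbinom (int q) l))"
    unfolding v sum_distrib_left by (simp add: mult_ac)
  also have "\<dots> =
      (\<Sum>l\<le>i. (if l \<le> q then zbinom p (i-l) * zbinom (-p) (q-l) * zbinom (-p - int (q-l)) l else 0))"
  proof (rule sum.cong[OF refl])
    fix l
    show "zbinom p (i-l) * (zbinom (-p) q * zbinom (int q) l) =
        (if l \<le> q then zbinom p (i-l) * zbinom (-p) (q-l) * zbinom (-p - int (q-l)) l else 0)"
    proof (cases "l \<le> q")
      case True
      have t: "zbinom (-p) q * zbinom (int q) (q-l) =
          zbinom (-p) (q-l) * zbinom (-p - int (q-l)) (q - (q-l))"
        using zbinom_trinomial_revision[where k="q-l" and m=q and a="-p"] True by simp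
      have e: "zbinom (int q) (q-l) = zbinom (int q) l" "q - (q-l) = l"
        using zbinom_of_nat_symmetric[of l q] True by auto
      show ?thesis using t True unfolding e by (simp add: mult_ac)
    qed (simp add: zbinom_of_nat_eq_0)
  qed
  also have "\<dots> =
      (\<Sum>l\<le>min i q. zbinom p (i-l) * zbinom (-p) (q-l) * zbinom (-p - int (q-l)) l)"
    by (rule sum_atMost_if_le)
  finally show ?thesis .
qed

lemma zbinom_convolution:
  "(\<Sum>j\<le>N. zbinom A j * (\<Sum>l\<le>N-j. c (j+l) * zbinom (B + int (j+l)) l)) =
   (\<Sum>m\<le>N. c m * zbinom (A + B + int m) m)"
proof -
  have "(\<Sum>j\<le>N. zbinom A j * (\<Sum>l\<le>N-j. c (j+l) * zbinom (B + int (j+l)) l)) =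
      (\<Sum>j\<le>N. \<Sum>l\<le>N-j. zbinom A j * (c (j+l) * zbinom (B + int (j+l)) l))"
    by (simp add: sum_distrib_left)
  also have "\<dots> =
      (\<Sum>m\<le>N. \<Sum>j\<le>m. zbinom A j * (c (j + (m-j)) * zbinom (B + int (j + (m-j))) (m-j)))"
    by (rule sum_triangle_antidiagonal)
  also have "\<dots> = (\<Sum>m\<le>N. c m * (\<Sum>j\<le>m. zbinom A j * zbinom (B + int m) (m-j)))"
    by (intro sum.cong refl) (auto simp: sum_distrib_left mult_ac)
  also have "\<dots> = (\<Sum>m\<le>N. c m * zbinom (A + B + int m) m)"
    by (simp add: zbinom_Vandermonde add.assoc)
  finally show ?thesis .
qed

lemma zbinom_L1_Lm_identity:
  fixes \<alpha> \<beta> :: nat and p W :: int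
  shows "(\<Sum>j\<le>min \<alpha> \<beta>. zbinom (W + int \<alpha> - int \<beta>) j *
      (zbinom p (\<alpha>-j) * zbinom (int (\<alpha>-j) - p) (\<beta>-j))) =
    (\<Sum>j\<le>min \<alpha> \<beta>. zbinom (W + 2*p) j * (zbinom (-p) (\<beta>-j) * zbinom (p + int (\<beta>-j)) (\<alpha>-j)))"
proof -
  define N where "N = min \<alpha> \<beta>"
  define c where "c m = zbinom p (\<alpha>-m) * zbinom (-p) (\<beta>-m)" for m
  have N: "min (\<alpha>-j) (\<beta>-j) = N - j" for j
    unfolding N_def by auto
  have left: "zbinom p (\<alpha>-j) * zbinom (int (\<alpha>-j) - p) (\<beta>-j) =
      (\<Sum>l\<le>N-j. c (j+l) * zbinom (p - int \<alpha> + int (j+l)) l)" if "j \<le> N" for j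
    unfolding zbinom_kernel_expansion_left N
    by (intro sum.cong refl) (use that in \<open>auto simp: c_def N_def algebra_simps\<close>)
  have right: "zbinom (-p) (\<beta>-j) * zbinom (p + int (\<beta>-j)) (\<alpha>-j) =
      (\<Sum>l\<le>N-j. c (j+l) * zbinom (-p - int \<beta> + int (j+l)) l)" if "j \<le> N" for j
    unfolding zbinom_kernel_expansion_right N
    by (intro sum.cong refl) (use that in \<open>auto simp: c_def N_def algebra_simps\<close>)
  have "(\<Sum>j\<le>N. zbinom (W + int \<alpha> - int \<beta>) j * (zbinom p (\<alpha>-j) *
      zbinom (int (\<alpha>-j) - p) (\<beta>-j))) =
      (\<Sum>j\<le>N. zbinom (W + int \<alpha> - int \<beta>) j * (\<Sum>l\<le>N-j. c (j+l) * zbinom (p - int \<alpha> + int (j+l)) l))"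
    by (intro sum.cong refl) (simp add: left)
  also have "\<dots> =
      (\<Sum>m\<le>N. c m * zbinom (W + int \<alpha> - int \<beta> + (p - int \<alpha>) + int m) m)"
    by (rule zbinom_convolution)
  also have "\<dots> = (\<Sum>m\<le>N. c m * zbinom (W + 2*p + (-p - int \<beta>) + int m) m)"
    by (simp add: algebra_simps)
  also have "\<dots> =
      (\<Sum>j\<le>N. zbinom (W + 2*p) j * (\<Sum>l\<le>N-j. c (j+l) * zbinom (-p - int \<beta> + int (j+l)) l))"
    by (rule zbinom_convolution[symmetric])
  also have "\<dots> =
      (\<Sum>j\<le>N. zbinom (W + 2*p) j * (zbinom (-p) (\<beta>-j) * zbinom (p + int (\<beta>-j)) (\<alpha>-j)))"
    by (intro sum.cong refl) (simp add: right)
  finally show ?thesis unfolding N_def .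
qed

lemma zbinom_L1_Y_identity_lhs:
  fixes I J :: nat and p Z :: int
  shows "(\<Sum>q\<le>min I J. zbinom p (I-q) * zbinom (Z - int I - p) (J-q) *
      zbinom (int q - int I) q) =
    (\<Sum>r\<le>min I J. zbinom p (I-r) * zbinom (-p) r * zbinom (Z - p - int r) (J-r))"
    (is "_ = ?rhs")
proof -
  let ?N = "min I J"
  have "(\<Sum>q\<le>?N. zbinom p (I-q) * zbinom (Z - int I - p) (J-q) * zbinom (int q - int I) q)
      = (\<Sum>q\<le>?N. \<Sum>r\<le>q. zbinom (-p) r * (zbinom p (I-q) * zbinom (p - int I + int q) (q - r)) * zbinom (Z - int I - p) (J-q))"
  proof (rule sum.cong[OF refl])
    fix q
    have "zbinom (int q - int I) q = (\<Sum>r\<le>q. zbinom (-p) r * zbinom (p - int I + int q) (q - r))"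
      using zbinom_Vandermonde[where n=q and a="-p" and b="p - int I + int q"] by simp
    then show "zbinom p (I-q) * zbinom (Z - int I - p) (J-q) * zbinom (int q - int I) q =
        (\<Sum>r\<le>q. zbinom (-p) r * (zbinom p (I-q) * zbinom (p - int I + int q) (q - r)) * zbinom (Z - int I - p) (J-q))"
      by (simp add: sum_distrib_left sum_distrib_right mult_ac)
  qed
  also have "\<dots> =
      (\<Sum>q\<le>?N. \<Sum>r\<le>q. zbinom p (I-r) * zbinom (-p) r * (zbinom (int (I-r)) (q-r) * zbinom (Z - int I - p) (J-q)))"
  proof (intro sum.cong refl)
    fix q r assume q: "q \<in> {..?N}" and r: "r \<in> {..q}"
    then have rq: "r \<le> q" "q \<le> I" by auto
    have t: "zbinom p (I-r) * zbinom (int (I-r)) (I-q) =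
        zbinom p (I-q) * zbinom (p - int (I-q)) ((I-r)-(I-q))"
      using zbinom_trinomial_revision[where k="I-q" and m="I-r" and a=p] rq by simp
    have e1: "zbinom (int (I-r)) (I-q) = zbinom (int (I-r)) (q-r)"
      using zbinom_of_nat_symmetric[of "I-q" "I-r"] rq by simp
    have e2: "(I-r)-(I-q) = q - r" "p - int (I-q) = p - int I + int q" using rq by auto
    have key: "zbinom p (I-q) * zbinom (p - int I + int q) (q - r) =
        zbinom p (I-r) * zbinom (int (I-r)) (q-r)"
      using t unfolding e1 e2 by simp
    show "zbinom (-p) r * (zbinom p (I-q) * zbinom (p - int I + int q) (q - r)) *
        zbinom (Z - int I - p) (J-q) =
        zbinom p (I-r) * zbinom (-p) r * (zbinom (int (I-r)) (q-r) * zbinom (Z - int I - p) (J-q))"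
      unfolding key by (simp add: mult_ac)
  qed
  also have "\<dots> =
      (\<Sum>r\<le>?N. \<Sum>s\<le>?N-r. zbinom p (I-r) * zbinom (-p) r * (zbinom (int (I-r)) (r+s-r) * zbinom (Z - int I - p) (J-(r+s))))"
    by (rule sum_triangle_swap)
  also have "\<dots> =
      (\<Sum>r\<le>?N. zbinom p (I-r) * zbinom (-p) r * (\<Sum>s\<le>J-r. zbinom (int (I-r)) s * zbinom (Z - int I - p) (J-r-s)))"
  proof (rule sum.cong[OF refl])
    fix r assume r: "r \<in> {..?N}"
    have "(\<Sum>s\<le>?N-r. zbinom p (I-r) * zbinom (-p) r * (zbinom (int (I-r)) s * zbinom (Z - int I - p) (J-r-s))) =
        (\<Sum>s\<le>J-r. zbinom p (I-r) * zbinom (-p) r * (zbinom (int (I-r)) s * zbinom (Z - int I - p) (J-r-s)))"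
      by (rule sum.mono_neutral_left) (auto simp: zbinom_of_nat_eq_0)
    then show "(\<Sum>s\<le>?N-r. zbinom p (I-r) * zbinom (-p) r * (zbinom (int (I-r)) (r+s-r) *
        zbinom (Z - int I - p) (J-(r+s)))) =
       zbinom p (I-r) * zbinom (-p) r * (\<Sum>s\<le>J-r. zbinom (int (I-r)) s * zbinom (Z - int I - p) (J-r-s))"
      by (simp add: sum_distrib_left diff_diff_add)
  qed
  also have "\<dots> = ?rhs"
  proof (rule sum.cong[OF refl])
    fix r assume "r \<in> {..?N}"
    then have "int (I - r) + (Z - int I - p) = Z - p - int r" by auto
    moreover have "(\<Sum>s\<le>J-r. zbinom (int (I-r)) s * zbinom (Z - int I - p) (J-r-s)) =
        zbinom (int (I-r) + (Z - int I - p)) (J - r)"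
      by (rule zbinom_Vandermonde)
    ultimately show "zbinom p (I-r) * zbinom (-p) r * (\<Sum>s\<le>J-r. zbinom (int (I-r)) s *
        zbinom (Z - int I - p) (J-r-s)) =
        zbinom p (I-r) * zbinom (-p) r * zbinom (Z - p - int r) (J-r)"
      by simp
  qed
  finally show ?thesis .
qed

lemma zbinom_L1_Y_identity_rhs:
  fixes I J :: nat and p Z :: int
  shows "(\<Sum>q\<le>J. zbinom Z (J-q) * zbinom (-p) q * zbinom (p + int q) I) =
    (\<Sum>r\<le>min I J. zbinom p (I-r) * zbinom (-p) r * zbinom (Z - p - int r) (J-r))"
    (is "_ = ?rhs")
proof -
  have "(\<Sum>q\<le>J. zbinom Z (J-q) * zbinom (-p) q * zbinom (p + int q) I)
      = (\<Sum>q\<le>J. \<Sum>r\<le>I. zbinom Z (J-q) * zbinom p (I-r) * (zbinom (-p) q * zbinom (int q) r))"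
  proof (rule sum.cong[OF refl])
    fix q
    have "zbinom (p + int q) I = (\<Sum>r\<le>I. zbinom (int q) r * zbinom p (I-r))"
      using zbinom_Vandermonde[where n=I and a="int q" and b=p] by (simp add: add.commute)
    then show "zbinom Z (J-q) * zbinom (-p) q * zbinom (p + int q) I =
        (\<Sum>r\<le>I. zbinom Z (J-q) * zbinom p (I-r) * (zbinom (-p) q * zbinom (int q) r))"
      by (simp add: sum_distrib_left mult_ac)
  qed
  also have "\<dots> =
      (\<Sum>q\<le>J. \<Sum>r\<le>I. (if r \<le> q then zbinom p (I-r) * zbinom (-p) r * (zbinom (-p - int r) (q - r) * zbinom Z (J - r - (q - r))) else 0))"
  proof (intro sum.cong refl)
    fix q r
    show "zbinom Z (J-q) * zbinom p (I-r) * (zbinom (-p) q * zbinom (int q) r) =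
        (if r \<le> q then zbinom p (I-r) * zbinom (-p) r * (zbinom (-p - int r) (q - r) * zbinom Z (J - r - (q - r))) else 0)"
    proof (cases "r \<le> q")
      case True
      then have "J - r - (q - r) = J - q" by simp
      with True zbinom_trinomial_revision[OF True, of "-p"] show ?thesis by (simp add: mult_ac)
    qed (simp add: zbinom_of_nat_eq_0)
  qed
  also have "\<dots> =
      (\<Sum>r\<le>I. \<Sum>q\<le>J. (if r \<le> q then zbinom p (I-r) * zbinom (-p) r * (zbinom (-p - int r) (q - r) * zbinom Z (J - r - (q - r))) else 0))"
    by (rule sum.swap)
  also have "\<dots> =
      (\<Sum>r\<le>I. (if r \<le> J then zbinom p (I-r) * zbinom (-p) r * (\<Sum>s\<le>J-r. zbinom (-p - int r) s * zbinom Z (J - r - s)) else 0))"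
  proof (rule sum.cong[OF refl])
    fix r
    show "(\<Sum>q\<le>J. (if r \<le> q then zbinom p (I-r) * zbinom (-p) r *
        (zbinom (-p - int r) (q - r) * zbinom Z (J - r - (q - r))) else 0))
      = (if r \<le> J then zbinom p (I-r) * zbinom (-p) r * (\<Sum>s\<le>J-r. zbinom (-p - int r) s * zbinom Z (J - r - s)) else 0)"
      using sum_atMost_shift_if[where r=r and J=J and h="\<lambda>s. zbinom p (I-r) * zbinom (-p) r *
          (zbinom (-p - int r) s * zbinom Z (J - r - s))"]
      by (simp add: sum_distrib_left)
  qed
  also have "\<dots> =
      (\<Sum>r\<le>I. (if r \<le> J then zbinom p (I-r) * zbinom (-p) r * zbinom (Z - p - int r) (J-r) else 0))"
    by (simp only: zbinom_Vandermonde) (simp add: algebra_simps cong: if_cong)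
  also have "\<dots> = ?rhs" by (rule sum_atMost_if_le)
  finally show ?thesis .
qed

lemma zbinom_L1_Y_identity:
  fixes I J :: nat and p Z :: int
  shows "(\<Sum>q\<le>min I J. zbinom p (I-q) * zbinom (Z - int I - p) (J-q) *
      zbinom (int q - int I) q) =
    (\<Sum>q\<le>J. zbinom Z (J-q) * zbinom (-p) q * zbinom (p + int q) I)"
  unfolding zbinom_L1_Y_identity_lhs zbinom_L1_Y_identity_rhs ..

lemma zbinom_L1_L1_coeff:
  assumes t: "t \<le> r + s"
  shows "(\<Sum>i\<in>{i. i\<le>s \<and> i\<le>t \<and> t-i\<le>r}. zbinom q i *
      zbinom (q - int i) (t - i) * int ((r - (t - i) + (s - i)) choose (r - (t - i))))
     = zbinom q t * int ((r + s) choose r)"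
proof -
  let ?A = "{i. i\<le>s \<and> i\<le>t \<and> t-i\<le>r}"
  have "(\<Sum>i\<in>?A. zbinom q i * zbinom (q - int i) (t - i) *
      int ((r - (t - i) + (s - i)) choose (r - (t - i))))
      = (\<Sum>i\<in>?A. zbinom q t * int ((t choose i) * ((r + s - t) choose (s - i))))"
  proof (rule sum.cong[OF refl])
    fix i assume "i \<in> ?A"
    then have i: "i \<le> s" "i \<le> t" "t - i \<le> r" by auto
    have "zbinom q t * zbinom (int t) i =
        zbinom q i * zbinom (q - int i) (t - i)" using zbinom_trinomial_revision[OF i(2)] by simp
    moreover have "r - (t - i) + (s - i) = r + s - t" using i by auto
    moreover have "(r + s - t) choose (r - (t - i)) = (r + s - t) choose (s - i)"
      using i binomial_symmetric[of "s - i" "r + s - t"] by (simp add: algebra_simps)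
    ultimately show "zbinom q i * zbinom (q - int i) (t - i) *
        int ((r - (t - i) + (s - i)) choose (r - (t - i))) =
        zbinom q t * int ((t choose i) * ((r + s - t) choose (s - i)))"
      by (simp add: zbinom_of_nat)
  qed
  also have "\<dots> = zbinom q t * int (\<Sum>i\<in>?A. (t choose i) * ((r + s - t) choose (s - i)))"
    by (simp add: sum_distrib_left)
  also have "(\<Sum>i\<in>?A. (t choose i) * ((r + s - t) choose (s - i))) =
      (\<Sum>i\<in>{0..s}. (t choose i) * ((r + s - t) choose (s - i)))"
    using t by (intro sum.mono_neutral_left) auto
  also have "\<dots> = (t + (r + s - t)) choose s" by (rule binomial_Vandermonde)
  also have "\<dots> = (r + s) choose r" using t binomial_symmetric[of r "r + s"] by simp
  finally show ?thesis .
qed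

lemma alternating_sum_choose:
  "(\<Sum>q\<le>m. (-1)^q * (of_nat (m choose (m - q)) :: 'a::comm_ring_1)) = (if m = 0 then 1 else 0)"
proof -
  have "(\<Sum>q\<le>m. (-1)^q * (of_nat (m choose (m - q)) :: 'a)) =
      (\<Sum>q\<le>m. (-1)^q * of_nat (m choose q))"
    by (intro sum.cong refl) (simp add: binomial_symmetric[symmetric])
  then show ?thesis
    using choose_alternating_sum[of m, where 'a='a] by (cases "m = 0") auto
qed

context module
begin

lemma sum_regroup_L1_Lm:
  fixes T :: "nat \<Rightarrow> nat \<Rightarrow> 'b" and a r :: nat and p W :: int
  shows "(\<Sum>i\<le>r. \<Sum>q\<le>a. \<Sum>j\<le>min (a-q) (r-i).
      scale ((-1)^i * ibinom p i * ibinom (int i - p) q * ((-1)^j * ibinom (W + int i - int q) j))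
        (T (i+j) (q+j))) =
    (\<Sum>j\<le>min a r. \<Sum>q\<le>a-j. \<Sum>i\<le>r-j.
      scale ((-1)^j * ibinom (W + 2*p) j * ibinom (-p) q * ((-1)^i * ibinom (p + int q) i))
        (T (i+j) (q+j)))"
proof -
  define fL where "fL i q j =
    (-1::'a)^i * ibinom p i * ibinom (int i - p) q * ((-1)^j * ibinom (W + int i - int q) j)" for i q j
  define fR where "fR i q j =
    (-1::'a)^j * ibinom (W + 2*p) j * ibinom (-p) q * ((-1)^i * ibinom (p + int q) i)" for i q j
  define cL where "cL \<alpha> \<beta> j = (-1::'a)^\<alpha> *
    of_int (zbinom (W + int \<alpha> - int \<beta>) j * (zbinom p (\<alpha>-j) * zbinom (int (\<alpha>-j) - p) (\<beta>-j)))"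
    for \<alpha> \<beta> j
  define cR where "cR \<alpha> \<beta> j = (-1::'a)^\<alpha> *
    of_int (zbinom (W + 2*p) j * (zbinom (-p) (\<beta>-j) * zbinom (p + int (\<beta>-j)) (\<alpha>-j)))"
    for \<alpha> \<beta> j
  have sign: "(-1::'a)^\<alpha> = (-1)^(\<alpha>-j) * (-1)^j" if "j \<le> \<alpha>" for \<alpha> j
    using that by (simp flip: power_add)
  have fL_eq: "fL (\<alpha>-j) (\<beta>-j) j = cL \<alpha> \<beta> j" if "j \<le> \<alpha>" "j \<le> \<beta>" for \<alpha> \<beta> j
  proof -
    have W: "W + int (\<alpha>-j) - int (\<beta>-j) = W + int \<alpha> - int \<beta>" using that by simp
    show ?thesis
      unfolding fL_def cL_def sign[OF that(1)] ibinom_conv_zbinom W by (simp add: mult_ac)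
  qed
  have fR_eq: "fR (\<alpha>-j) (\<beta>-j) j = cR \<alpha> \<beta> j" if "j \<le> \<alpha>" for \<alpha> \<beta> j
    unfolding fR_def cR_def sign[OF that] ibinom_conv_zbinom by (simp add: mult_ac)
  have coeff: "(\<Sum>j\<le>min \<alpha> \<beta>. cL \<alpha> \<beta> j) = (\<Sum>j\<le>min \<alpha> \<beta>. cR \<alpha> \<beta> j)" for \<alpha> \<beta>
    by (simp only: cL_def cR_def sum_distrib_left[symmetric] of_int_sum[symmetric] zbinom_L1_Lm_identity)
  have "(\<Sum>i\<le>r. \<Sum>q\<le>a. \<Sum>j\<le>min (a-q) (r-i). scale (fL i q j) (T (i+j) (q+j))) =
      (\<Sum>\<alpha>\<le>r. \<Sum>\<beta>\<le>a. \<Sum>j\<le>min \<alpha> \<beta>. scale (cL \<alpha> \<beta> j) (T \<alpha> \<beta>))"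
    unfolding sum_shear_left by (intro sum.cong refl) (simp add: fL_eq)
  also have "\<dots> = (\<Sum>\<alpha>\<le>r. \<Sum>\<beta>\<le>a. \<Sum>j\<le>min \<alpha> \<beta>. scale (cR \<alpha> \<beta> j) (T \<alpha> \<beta>))"
    by (simp only: scale_sum_left[symmetric] coeff)
  also have "\<dots> = (\<Sum>j\<le>min a r. \<Sum>q\<le>a-j. \<Sum>i\<le>r-j. scale (fR i q j) (T (i+j) (q+j)))"
    unfolding sum_shear_right by (intro sum.cong refl) (simp add: fR_eq)
  finally show ?thesis unfolding fL_def fR_def .
qed

lemma sum_regroup_L1_Y:
  fixes TB :: "nat \<Rightarrow> nat \<Rightarrow> nat \<Rightarrow> nat \<Rightarrow> 'b" and a D :: nat and p c :: int
  assumes vanish: "\<And>I K J T. D < I \<Longrightarrow> TB I K J T = 0"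
  shows "(\<Sum>i\<le>D. \<Sum>k\<le>a. \<Sum>j\<le>a-k. \<Sum>q\<le>k.
      scale (ibinom p i * ibinom (c - int k - int i - p) j * ibinom (- int i) q)
        (TB (i+q) (k-q) (j+q) (a-k-j))) =
    (\<Sum>k\<le>a. \<Sum>j\<le>a-k. \<Sum>q\<le>a-k-j. \<Sum>i\<le>D+a.
      scale (ibinom (c - int k) j * ibinom (-p) q * ibinom (p + int q) i) (TB i k (j+q) (a-k-j-q)))"
proof -
  define gL where "gL i k j q =
    scale (ibinom p i * ibinom (c - int k - int i - p) j * ibinom (- int i) q) (TB (i+q) (k-q) (j+q) (a-k-j))"
    for i k j q
  define gR where "gR k j q i =
    scale (ibinom (c - int k) j * ibinom (-p) q * ibinom (p + int q) i) (TB i k (j+q) (a-k-j-q))" for k j q i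
  have block: "(\<Sum>q\<in>{q. q \<le> a-K-T \<and> q \<le> I \<and> I-q \<le> D}. gL (I-q) (K+q) (a-K-T-q) q) =
      (\<Sum>q\<le>a-K-T. gR K (a-K-T-q) q I)" if "K \<le> a" "T \<le> a-K" for I K T
  proof (cases "I \<le> D")
    case True
    define J where "J = a - K - T"
    have range: "{q. q \<le> J \<and> q \<le> I \<and> I-q \<le> D} = {..min I J}"
      using True by auto
    have left: "gL (I-q) (K+q) (J-q) q =
        scale (of_int (zbinom p (I-q) * zbinom (c - int K - int I - p) (J-q) * zbinom (int q - int I) q))
          (TB I K J T)" if "q \<le> min I J" for q
    proof -
      have "I - q + q = I" "K + q - q = K" "J - q + q = J" "a - (K+q) - (J-q) = T"
        "c - int (K+q) - int (I-q) - p = c - int K - int I - p" "- int (I-q) = int q - int I"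
        using that \<open>K \<le> a\<close> \<open>T \<le> a-K\<close> unfolding J_def by auto
      then show ?thesis
        by (simp only: gL_def ibinom_conv_zbinom of_int_mult)
    qed
    have right: "gR K (J-q) q I =
        scale (of_int (zbinom (c - int K) (J-q) * zbinom (-p) q * zbinom (p + int q) I)) (TB I K J T)"
      if "q \<le> J" for q
    proof -
      have "J - q + q = J" "a - K - (J-q) - q = T"
        using that \<open>K \<le> a\<close> \<open>T \<le> a-K\<close> unfolding J_def by auto
      then show ?thesis
        by (simp only: gR_def ibinom_conv_zbinom of_int_mult)
    qed
    have "(\<Sum>q\<in>{q. q \<le> J \<and> q \<le> I \<and> I-q \<le> D}. gL (I-q) (K+q) (J-q) q) =
        scale (of_int (\<Sum>q\<le>min I J.
          zbinom p (I-q) * zbinom (c - int K - int I - p) (J-q) * zbinom (int q - int I) q)) (TB I K J T)"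
      unfolding range of_int_sum scale_sum_left by (intro sum.cong refl) (simp add: left)
    also have "\<dots> = scale (of_int (\<Sum>q\<le>J.
        zbinom (c - int K) (J-q) * zbinom (-p) q * zbinom (p + int q) I)) (TB I K J T)"
      by (simp only: zbinom_L1_Y_identity)
    also have "\<dots> = (\<Sum>q\<le>J. gR K (J-q) q I)"
      unfolding of_int_sum scale_sum_left by (intro sum.cong refl) (simp add: right)
    finally show ?thesis unfolding J_def .
  next
    case False
    then show ?thesis
      by (auto simp: gL_def gR_def vanish intro!: sum.neutral)
  qed
  have "(\<Sum>i\<le>D. \<Sum>k\<le>a. \<Sum>j\<le>a-k. \<Sum>q\<le>k. gL i k j q) =
      (\<Sum>I\<le>D+a. \<Sum>K\<le>a. \<Sum>T\<le>a-K. \<Sum>q\<in>{q. q \<le> a-K-T \<and> q \<le> I \<and> I-q \<le> D}. gL (I-q) (K+q) (a-K-T-q) q)"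
    by (rule sum_simplex_shift_left)
  also have "\<dots> = (\<Sum>I\<le>D+a. \<Sum>K\<le>a. \<Sum>T\<le>a-K. \<Sum>q\<le>a-K-T. gR K (a-K-T-q) q I)"
    by (intro sum.cong refl block) auto
  also have "\<dots> = (\<Sum>k\<le>a. \<Sum>j\<le>a-k. \<Sum>q\<le>a-k-j. \<Sum>i\<le>D+a. gR k j q i)"
    by (rule sum_simplex_shift_right[symmetric])
  finally show ?thesis unfolding gL_def gR_def .
qed

end

section \<open>The vacuum module \<open>V(\<ell>,0)\<close>\<close>

locale affine_vacuum_vertex_algebra =
  fixes scg :: "'k::field \<Rightarrow> 'g::ab_group_add \<Rightarrow> 'g"
    and br :: "'g \<Rightarrow> 'g \<Rightarrow> 'g" and fm :: "'g \<Rightarrow> 'g \<Rightarrow> 'k" and ell :: 'k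
    and sc :: "'k \<Rightarrow> 'v::ab_group_add \<Rightarrow> 'v"
    and rho :: "'g \<Rightarrow> int \<Rightarrow> 'v \<Rightarrow> 'v" and one :: 'v
    and Y :: "'v \<Rightarrow> int \<Rightarrow> 'v \<Rightarrow> 'v"
    and Lm L0 L1 :: "nat \<Rightarrow> 'v \<Rightarrow> 'v"
  assumes vacuum_module: "affine_vacuum_module scg br fm ell sc rho one"
    and vertex_alg: "vertex_algebra sc Y one"
    and Y_generator: "\<And>a n w. Y (rho a (-1) one) n w = rho a n w"
    and H_action: "H_action_induced sc rho one Lm L0 L1"
begin

lemma module_sc: "module sc"
  using vertex_alg unfolding vertex_algebra_def by (elim conjE)

sublocale vector_space sc
proof -
  interpret module sc by (rule module_sc)
  show "vector_space sc"
    by unfold_locales (simp_all add: scale_right_distrib scale_left_distrib)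
qed

lemma vacuum_module_basics:
  "aff_rep scg br fm ell UNIV (+) sc rho \<and> (\<forall>a n. n \<ge> 0 \<longrightarrow> rho a n one = 0) \<and>
   (\<forall>v. generated_by_vac sc rho one v)"
  using vacuum_module unfolding affine_vacuum_module_def by (elim conjE) (intro conjI; assumption)

lemma aff_rep: "aff_rep scg br fm ell UNIV (+) sc rho"
  using vacuum_module_basics by blast

lemma rho_add: "rho a n (x + y) = rho a n x + rho a n y"
  using aff_rep unfolding aff_rep_def by (elim conjE allE impE) (rule UNIV_I)+

lemma rho_scale: "rho a n (sc k x) = sc k (rho a n x)"
  using aff_rep unfolding aff_rep_def by (elim conjE allE impE) (rule UNIV_I)+

lemma rho_commutator: "rho a m (rho b n x) = rho b n (rho a m x) +
    (rho (br a b) (m + n) x + sc (of_int m * (if m + n = 0 then fm a b else 0) * ell) x)"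
  using aff_rep unfolding aff_rep_def by (elim conjE allE impE) (rule UNIV_I)+

lemma rho_vacuum: "n \<ge> 0 \<Longrightarrow> rho a n one = 0"
  using vacuum_module_basics by blast

lemma generated: "generated_by_vac sc rho one v"
  using vacuum_module_basics by blast

lemma Y_add_right: "Y u n (v + w) = Y u n v + Y u n w"
  using vertex_alg unfolding vertex_algebra_def by simp

lemma Y_scale_right: "Y u n (sc k w) = sc k (Y u n w)"
  using vertex_alg unfolding vertex_algebra_def by simp

lemma Y_add_left: "Y (u + v) n w = Y u n w + Y v n w"
  using vertex_alg unfolding vertex_algebra_def by simp

lemma Y_scale_left: "Y (sc k u) n w = sc k (Y u n w)"
  using vertex_alg unfolding vertex_algebra_def by simp

lemma Y_vacuum_left: "Y one n w = (if n = -1 then w else 0)"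
  using vertex_alg unfolding vertex_algebra_def by simp

lemma Y_creation: "n \<ge> 0 \<Longrightarrow> Y u n one = 0"
  using vertex_alg unfolding vertex_algebra_def by simp

lemma Borcherds:
  "fsum (\<lambda>i. sc (ibinom m i) (Y (Y u (l + int i) v) (m + n - int i) w)) =
   fsum (\<lambda>i. sc ((-1) ^ i * ibinom l i)
     (Y u (l + m - int i) (Y v (n + int i) w)
      - sc (if even l then 1 else -1) (Y v (l + n - int i) (Y u (m + int i) w))))"
  using vertex_alg unfolding vertex_algebra_def by simp

lemma L_linear:
  "L \<in> {Lm, L0, L1} \<Longrightarrow> L r (u + v) = L r u + L r v \<and> L r (sc k v) = sc k (L r v) \<and>
     L r one = (if r = 0 then one else 0)"
  using H_action unfolding H_action_induced_def by (elim conjE) blast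

lemma Lm_rho: "Lm r (rho a n v) =
    (\<Sum>i\<le>r. sc ((-1) ^ i * ibinom n i) (rho a (n - int i) (Lm (r - i) v)))"
  using H_action unfolding H_action_induced_def by (elim conjE) blast

lemma L0_rho: "L0 r (rho a n v) = (\<Sum>i\<le>r. sc (ibinom (2 * n) i) (rho a n (L0 (r - i) v)))"
  using H_action unfolding H_action_induced_def by (elim conjE) blast

lemma L1_rho: "L1 r (rho a n v) =
    (\<Sum>i\<le>r. sc (ibinom (- n) i) (rho a (n + int i) (L1 (r - i) v)))"
  using H_action unfolding H_action_induced_def by (elim conjE) blast

lemma additive_rho: "additive (rho a n)"
  by unfold_locales (rule rho_add)

lemma additive_Y_left: "additive (\<lambda>u. Y u n w)"
  by unfold_locales (rule Y_add_left)

lemma additive_Y_right: "additive (Y u n)"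
  by unfold_locales (rule Y_add_right)

lemmas rho_zero = additive.zero[OF additive_rho]
  and rho_sum = additive.sum[OF additive_rho]
  and Y_zero_left = additive.zero[OF additive_Y_left]
  and Y_sum_left = additive.sum[OF additive_Y_left]
  and Y_zero_right = additive.zero[OF additive_Y_right]
  and Y_sum_right = additive.sum[OF additive_Y_right]

lemma L1_add: "L1 r (u + v) = L1 r u + L1 r v"
  and L1_scale: "L1 r (sc k v) = sc k (L1 r v)"
  and L1_one: "L1 r one = (if r = 0 then one else 0)"
  and Lm_add: "Lm r (u + v) = Lm r u + Lm r v"
  and Lm_scale: "Lm r (sc k v) = sc k (Lm r v)"
  and Lm_one: "Lm r one = (if r = 0 then one else 0)"
  and L0_add: "L0 r (u + v) = L0 r u + L0 r v"
  and L0_scale: "L0 r (sc k v) = sc k (L0 r v)"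
  and L0_one: "L0 r one = (if r = 0 then one else 0)"
  by (simp_all add: L_linear)

lemma additive_L1: "additive (L1 r)"
  by unfold_locales (rule L1_add)

lemma additive_Lm: "additive (Lm r)"
  by unfold_locales (rule Lm_add)

lemma additive_L0: "additive (L0 r)"
  by unfold_locales (rule L0_add)

lemmas L1_zero = additive.zero[OF additive_L1]
  and L1_sum = additive.sum[OF additive_L1]
  and L1_diff = additive.diff[OF additive_L1]
  and Lm_zero = additive.zero[OF additive_Lm]
  and Lm_sum = additive.sum[OF additive_Lm]
  and L0_zero = additive.zero[OF additive_L0]
  and L0_sum = additive.sum[OF additive_L0]

abbreviation homogeneous where
  "homogeneous \<equiv> homog sc rho one"

lemma homogeneous_sum: "(\<And>i. i \<in> A \<Longrightarrow> homogeneous d (g i)) \<Longrightarrow> homogeneous d (sum g A)"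
proof (induction A rule: infinite_finite_induct)
  case (insert x F)
  then show ?case by (simp add: homog.homog_add)
qed (simp_all add: homog.homog_zero)

lemma homogeneous_fsum: "(\<And>i. homogeneous d (g i)) \<Longrightarrow> homogeneous d (fsum g)"
  unfolding fsum_def by (rule homogeneous_sum)

lemma homogeneous_diff: "homogeneous d x \<Longrightarrow> homogeneous d y \<Longrightarrow> homogeneous d (x - y)"
  using homog.homog_add[of sc rho one d x "- y"] homog.homog_scale[of sc rho one d y "-1"] by simp

lemma rho_homogeneous: "homogeneous e x \<Longrightarrow> homogeneous (e - n) (rho a n x)"
proof (induction arbitrary: a n rule: homog.induct)
  case homog_one
  show ?case
  proof (cases "n \<ge> 0")
    case False
    then have "homogeneous (0 + (-n)) (rho a (- (-n)) one)"
      by (intro homog.homog_act homog.homog_one) auto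
    then show ?thesis by simp
  qed (simp add: rho_vacuum homog.homog_zero)
next
  case (homog_act d x s b)
  have "homogeneous (d + s - n) (rho b (-s) (rho a n x))"
    using homog.homog_act[OF homog_act.IH homog_act.hyps(2)] by (simp add: algebra_simps)
  moreover have "homogeneous (d + s - n) (rho (br a b) (n + - s) x)"
    using homog_act.IH[where a="br a b" and n="n - s"] by (simp add: algebra_simps)
  moreover have "homogeneous (d + s - n) (sc (of_int n * (if n + - s = 0 then fm a b else 0) * ell) x)"
    using homog_act.hyps(1) by (cases "n + - s = 0") (simp_all add: homog.homog_scale homog.homog_zero)
  ultimately show ?case
    unfolding rho_commutator[of a n b "-s"] by (intro homog.homog_add)
qed (simp_all add: rho_zero rho_add rho_scale homog.homog_zero homog.homog_add homog.homog_scale)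

lemma homogeneous_negative_degree: "homogeneous d v \<Longrightarrow> d < 0 \<Longrightarrow> v = 0"
  by (induction rule: homog.induct) (simp_all add: rho_zero)

lemma rho_above_degree: "homogeneous d v \<Longrightarrow> d < n \<Longrightarrow> rho a n v = 0"
  using rho_homogeneous[of d v n a] homogeneous_negative_degree by auto

lemma Y_rho_left:
  "Y (rho a p x) n w = fsum (\<lambda>i. sc ((-1)^i * ibinom p i)
     (rho a (p - int i) (Y x (n + int i) w)
      - sc (if even p then 1 else -1) (Y x (p + n - int i) (rho a (int i) w))))"
proof -
  have "Y (rho a p x) n w =
      fsum (\<lambda>i. sc (ibinom 0 i) (Y (Y (rho a (-1) one) (p + int i) x) (0 + n - int i) w))"
    by (subst fsum_eq_first) (auto simp: ibinom_0_left Y_generator)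
  also have "\<dots> = fsum (\<lambda>i. sc ((-1)^i * ibinom p i)
     (Y (rho a (-1) one) (p + 0 - int i) (Y x (n + int i) w)
      - sc (if even p then 1 else -1) (Y x (p + n - int i) (Y (rho a (-1) one) (0 + int i) w))))"
    by (rule Borcherds)
  finally show ?thesis by (simp add: Y_generator)
qed

lemma rho_Y_commutator:
  "rho a p (Y u n x) - Y u n (rho a p x) =
     fsum (\<lambda>i. sc (ibinom p i) (Y (rho a (int i) u) (p + n - int i) x))"
proof -
  have "rho a p (Y u n x) - Y u n (rho a p x) = fsum (\<lambda>i. sc ((-1)^i * ibinom 0 i)
     (Y (rho a (-1) one) (0 + p - int i) (Y u (n + int i) x)
      - sc (if even (0::int) then 1 else -1) (Y u (0 + n - int i) (Y (rho a (-1) one) (p + int i) x))))"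
    by (subst fsum_eq_first) (auto simp: ibinom_0_left Y_generator)
  also have "\<dots> = fsum (\<lambda>i. sc (ibinom p i) (Y (Y (rho a (-1) one) (0 + int i) u) (p + n - int i) x))"
    by (rule Borcherds[symmetric])
  finally show ?thesis by (simp add: Y_generator)
qed

lemma Y_rho_right:
  assumes "homogeneous d u" and "d \<le> int D"
  shows "Y u n (rho a p x) =
    rho a p (Y u n x) - (\<Sum>i\<le>D. sc (ibinom p i) (Y (rho a (int i) u) (p + n - int i) x))"
proof -
  have "fsum (\<lambda>i. sc (ibinom p i) (Y (rho a (int i) u) (p + n - int i) x)) =
      (\<Sum>i\<le>D. sc (ibinom p i) (Y (rho a (int i) u) (p + n - int i) x))"
    using assms by (intro fsum_eq_sum) (auto simp: rho_above_degree Y_zero_left)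
  then show ?thesis
    using rho_Y_commutator[of a p u n x] by (simp add: algebra_simps)
qed

lemma Y_homogeneous:
  "homogeneous m u \<Longrightarrow> homogeneous n v \<Longrightarrow> homogeneous (m + n - r - 1) (Y u r v)"
proof (induction arbitrary: v n r rule: homog.induct)
  case homog_one
  then show ?case by (auto simp: Y_vacuum_left homog.homog_zero)
next
  case (homog_act d x s a)
  show ?case
    unfolding Y_rho_left
  proof (intro homogeneous_fsum homog.homog_scale homogeneous_diff)
    fix i
    have "homogeneous (d + n - (r + int i) - 1 - (- s - int i)) (rho a (- s - int i) (Y x (r + int i) v))"
      by (intro rho_homogeneous homog_act.IH homog_act.prems)
    then show "homogeneous (d + s + n - r - 1) (rho a (- s - int i) (Y x (r + int i) v))"
      by (simp add: algebra_simps)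
    have "homogeneous (d + (n - int i) - (- s + r - int i) - 1) (Y x (- s + r - int i) (rho a (int i) v))"
      by (intro homog_act.IH rho_homogeneous homog_act.prems)
    then show "homogeneous (d + s + n - r - 1) (Y x (- s + r - int i) (rho a (int i) v))"
      by (simp add: algebra_simps)
  qed
qed (simp_all add: Y_zero_left Y_add_left Y_scale_left homog.homog_zero homog.homog_add homog.homog_scale)

lemma L1_homogeneous: "homogeneous d v \<Longrightarrow> homogeneous (d - int r) (L1 r v)"
proof (induction arbitrary: r rule: homog.induct)
  case (homog_act d x s a)
  show ?case
    unfolding L1_rho
  proof (intro homogeneous_sum homog.homog_scale)
    fix i assume "i \<in> {..r}"
    have "homogeneous (d - int (r - i) - (- s + int i)) (rho a (- s + int i) (L1 (r - i) x))"
      by (intro rho_homogeneous homog_act.IH)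
    moreover have "d - int (r - i) - (- s + int i) = d + s - int r"
      using \<open>i \<in> {..r}\<close> by auto
    ultimately show "homogeneous (d + s - int r) (rho a (- s + int i) (L1 (r - i) x))"
      by (simp only:)
  qed
qed (auto simp: L1_one L1_zero L1_add L1_scale homog.homog_zero homog.homog_one homog.homog_add homog.homog_scale)

lemma L0_homogeneous: "homogeneous d v \<Longrightarrow> L0 r v = sc (ibinom (- 2 * d) r) v"
proof (induction arbitrary: r rule: homog.induct)
  case (homog_act d x s a)
  have "L0 r (rho a (-s) x) = (\<Sum>i\<le>r. sc (ibinom (2 * -s) i * ibinom (- 2 * d) (r - i)) (rho a (-s) x))"
    unfolding L0_rho homog_act.IH by (simp add: rho_scale)
  also have "\<dots> = sc (ibinom (2 * -s + - 2 * d) r) (rho a (-s) x)"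
    by (simp only: scale_sum_left[symmetric] ibinom_Vandermonde)
  finally show ?case by (simp add: algebra_simps)
qed (auto simp: L0_one L0_zero L0_add L0_scale ibinom_0_left scale_right_distrib mult.commute)




lemma homogeneous_decomposition:
  "\<exists>S c. finite S \<and> (\<forall>n\<in>S. homogeneous n (c n)) \<and> v = (\<Sum>n\<in>S. c n)"
  using generated[of v]
proof (induction rule: generated_by_vac.induct)
  case gen_one
  show ?case
    by (intro exI[of _ "{0}"] exI[of _ "\<lambda>_. one"]) (simp add: homog.homog_one)
next
  case (gen_add x y)
  then obtain S1 c1 S2 c2 where 1: "finite S1" "\<forall>n\<in>S1. homogeneous n (c1 n)" "x = (\<Sum>n\<in>S1. c1 n)"
    and 2: "finite S2" "\<forall>n\<in>S2. homogeneous n (c2 n)" "y = (\<Sum>n\<in>S2. c2 n)"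
    by blast
  define c where "c n = (if n \<in> S1 then c1 n else 0) + (if n \<in> S2 then c2 n else 0)" for n
  have "(\<Sum>n\<in>S1 \<union> S2. (if n \<in> S1 then c1 n else 0)) = (\<Sum>n\<in>S1. c1 n)"
    using 1 2 by (intro sum.mono_neutral_cong_right) auto
  moreover have "(\<Sum>n\<in>S1 \<union> S2. (if n \<in> S2 then c2 n else 0)) = (\<Sum>n\<in>S2. c2 n)"
    using 1 2 by (intro sum.mono_neutral_cong_right) auto
  ultimately have "x + y = (\<Sum>n\<in>S1 \<union> S2. c n)"
    unfolding c_def sum.distrib 1 2 by simp
  moreover have "\<forall>n\<in>S1 \<union> S2. homogeneous n (c n)"
    using 1 2 unfolding c_def by (auto intro!: homog.homog_add homog.homog_zero)
  ultimately show ?case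
    using 1 2 by blast
next
  case (gen_scale x k)
  then obtain S c where "finite S" "\<forall>n\<in>S. homogeneous n (c n)" "x = (\<Sum>n\<in>S. c n)"
    by blast
  then show ?case
    by (intro exI[of _ S] exI[of _ "\<lambda>n. sc k (c n)"]) (simp add: homog.homog_scale scale_sum_right)
next
  case (gen_act x a p)
  then obtain S c where S: "finite S" "\<forall>n\<in>S. homogeneous n (c n)" "x = (\<Sum>n\<in>S. c n)"
    by blast
  have "rho a p x = (\<Sum>m\<in>(\<lambda>n. n - p) ` S. rho a p (c (m + p)))"
    unfolding S rho_sum by (subst sum.reindex) (auto simp: inj_on_def)
  moreover have "homogeneous (n - p) (rho a p (c (n - p + p)))" if "n \<in> S" for n
    using S(2) that rho_homogeneous by simp
  ultimately show ?case
    using S(1) by (intro exI[of _ "(\<lambda>n. n - p) ` S"] exI[of _ "\<lambda>m. rho a p (c (m + p))"]) auto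
qed

lemma homogeneous_sum_eq_0:
  "finite S \<Longrightarrow> \<forall>n\<in>S. homogeneous n (c n) \<Longrightarrow> sum c S = 0 \<Longrightarrow> \<forall>n\<in>S. c n = 0"
proof (induction S arbitrary: c rule: finite_induct)
  case (insert x F)
  define ev where "ev n r = (ibinom (- 2 * n) r :: 'k)" for n r
  have cx: "c x = - sum c F"
    using insert by (simp add: eq_neg_iff_add_eq_0)
  have L0_c: "L0 r (c n) = sc (ev n r) (c n)" if "n \<in> insert x F" for n r
    using insert.prems(1) that L0_homogeneous unfolding ev_def by blast
  have separated: "\<forall>n\<in>F. sc (ev n r - ev x r) (c n) = 0" for r
  proof (rule insert.IH)
    show "\<forall>n\<in>F. homogeneous n (sc (ev n r - ev x r) (c n))"
      using insert by (simp add: homog.homog_scale)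
    have "0 = L0 r (sum c (insert x F))"
      using insert L0_zero by simp
    also have "\<dots> = sc (ev x r) (c x) + (\<Sum>n\<in>F. sc (ev n r) (c n))"
      using insert.hyps by (simp add: L0_add L0_sum L0_c cong: sum.cong)
    also have "\<dots> = (\<Sum>n\<in>F. sc (ev n r - ev x r) (c n))"
      by (simp add: cx scale_left_diff_distrib sum_subtractf scale_sum_right)
    finally show "(\<Sum>n\<in>F. sc (ev n r - ev x r) (c n)) = 0" ..
  qed
  have "c n = 0" if n: "n \<in> F" for n
  proof -
    obtain r where "ev n r \<noteq> ev x r"
      using n insert.hyps(2) ibinom_sequence_inj[of "- 2 * n" "- 2 * x"] unfolding ev_def by auto
    then show ?thesis
      using separated[of r] n by auto
  qed
  then show ?case
    using cx by simp
qed simp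

lemma Lm_eq_Y: "Lm r v = Y v (- int r - 1) one"
  using generated[of v]
proof (induction arbitrary: r rule: generated_by_vac.induct)
  case (gen_act x a p)
  have "Y (rho a p x) (- int r - 1) one =
      (\<Sum>i\<le>r. sc ((-1)^i * ibinom p i) (rho a (p - int i) (Y x (- int r - 1 + int i) one)))"
    unfolding Y_rho_left
    by (subst fsum_eq_sum[of "{..r}"]) (auto simp: rho_vacuum rho_zero Y_zero_right Y_creation)
  also have "\<dots> = Lm r (rho a p x)"
    unfolding Lm_rho gen_act.IH by (intro sum.cong refl) (simp add: of_nat_diff algebra_simps)
  finally show ?case ..
qed (simp_all add: Lm_one Y_vacuum_left Lm_add Y_add_left Lm_scale Y_scale_left)

lemma L1_L1: "L1 r (L1 s w) = sc (of_nat ((r + s) choose r)) (L1 (r + s) w)"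
  using generated[of w]
proof (induction arbitrary: r s rule: generated_by_vac.induct)
  case (gen_act x a p)
  define A where "A t = {i. i \<le> s \<and> i \<le> t \<and> t - i \<le> r}" for t
  define F where "F i j = sc (ibinom (-p) i * ibinom (- (p + int i)) j * of_nat ((r - j + (s - i)) choose (r - j)))
     (rho a (p + int (i + j)) (L1 (r - j + (s - i)) x))" for i j
  have "L1 r (L1 s (rho a p x)) = (\<Sum>i\<le>s. \<Sum>j\<le>r. F i j)"
    unfolding L1_rho L1_sum L1_scale scale_sum_right F_def gen_act.IH
    by (intro sum.cong refl) (simp add: rho_scale mult_ac add.assoc)
  also have "\<dots> = (\<Sum>t\<le>r+s. \<Sum>i\<in>A t. F i (t-i))"
    unfolding A_def by (rule sum_box_antidiagonal)
  also have "\<dots> = (\<Sum>t\<le>r+s. sc (of_nat ((r + s) choose r) * ibinom (-p) t) (rho a (p + int t) (L1 (r + s - t) x)))"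
  proof (rule sum.cong[OF refl])
    fix t assume t: "t \<in> {..r+s}"
    have "(\<Sum>i\<in>A t. F i (t-i)) = sc (of_int (\<Sum>i\<in>A t.
        zbinom (-p) i * zbinom (-p - int i) (t - i) * int ((r - (t - i) + (s - i)) choose (r - (t - i)))))
        (rho a (p + int t) (L1 (r + s - t) x))"
      unfolding F_def scale_sum_left of_int_sum
      by (intro sum.cong refl) (auto simp: ibinom_conv_zbinom A_def)
    also have "\<dots> = sc (of_nat ((r + s) choose r) * ibinom (-p) t) (rho a (p + int t) (L1 (r + s - t) x))"
      using zbinom_L1_L1_coeff[of t r s "-p"] t by (simp add: A_def ibinom_conv_zbinom mult.commute)
    finally show "(\<Sum>i\<in>A t. F i (t-i)) = \<dots>" .
  qed
  also have "\<dots> = sc (of_nat ((r + s) choose r)) (L1 (r + s) (rho a p x))"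
    unfolding L1_rho scale_sum_right by (simp add: rho_scale)
  finally show ?case .
qed (auto simp: L1_one L1_zero L1_add L1_scale scale_right_distrib mult.commute)
lemma L1_Lm:
  "homogeneous d v \<Longrightarrow> L1 a (Lm r v) =
    (\<Sum>j\<le>min a r. sc ((-1)^j * ibinom (int a - 2*d - int r) j) (Lm (r-j) (L1 (a-j) v)))"
proof (induction arbitrary: a r rule: homog.induct)
  case homog_one
  have "sc ((-1)^j * ibinom (int a - 2*0 - int r) j) (Lm (r-j) (L1 (a-j) one)) =
      (if j = 0 \<and> a = 0 \<and> r = 0 then one else 0)" if "j \<le> min a r" for j
    using that by (auto simp: L1_one Lm_one Lm_zero ibinom_0_left)
  then have "(\<Sum>j\<le>min a r. sc ((-1)^j * ibinom (int a - 2*0 - int r) j) (Lm (r-j) (L1 (a-j) one))) =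
      (\<Sum>j\<le>min a r. if j = 0 \<and> a = 0 \<and> r = 0 then one else 0)"
    by (intro sum.cong) auto
  then show ?case
    by (cases "a = 0 \<and> r = 0") (auto simp: L1_one Lm_one L1_zero)
next
  case (homog_act e y s c)
  define p where "p = - s"
  define W where "W = int a - 2 * e - int r"
  define T where "T \<alpha> \<beta> = rho c (p - int \<alpha> + int \<beta>) (Lm (r - \<alpha>) (L1 (a - \<beta>) y))" for \<alpha> \<beta>
  define FL where "FL i q j = sc ((-1)^i * ibinom p i * ibinom (int i - p) q *
      ((-1)^j * ibinom (int (a-q) - 2*e - int (r-i)) j))
    (rho c (p - int i + int q) (Lm (r-i-j) (L1 (a-q-j) y)))" for i q j
  define FR where "FR i q j = sc ((-1)^j * ibinom (int a - 2*(e+s) - int r) j * ibinom (-p) q *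
      ((-1)^i * ibinom (p + int q) i))
    (rho c (p + int q - int i) (Lm (r-j-i) (L1 (a-j-q) y)))" for i q j
  have FL_eq: "FL i q j =
      sc ((-1)^i * ibinom p i * ibinom (int i - p) q * ((-1)^j * ibinom (W + int i - int q) j))
        (T (i+j) (q+j))" if "i \<in> {..r}" "q \<in> {..a}" for i q j
  proof -
    have "int (a-q) - 2*e - int (r-i) = W + int i - int q" "p - int i + int q = p - int (i+j) + int (q+j)"
      "r - i - j = r - (i+j)" "a - q - j = a - (q+j)"
      using that unfolding W_def by auto
    then show ?thesis
      unfolding FL_def T_def by (simp only:)
  qed
  have FR_eq: "FR i q j =
      sc ((-1)^j * ibinom (W + 2*p) j * ibinom (-p) q * ((-1)^i * ibinom (p + int q) i))
        (T (i+j) (q+j))" for i q j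
  proof -
    have "int a - 2*(e+s) - int r = W + 2*p" "p + int q - int i = p - int (i+j) + int (q+j)"
      "r - j - i = r - (i+j)" "a - j - q = a - (q+j)"
      unfolding W_def p_def by auto
    then show ?thesis
      unfolding FR_def T_def by (simp only:)
  qed
  have "L1 a (Lm r (rho c p y)) = (\<Sum>i\<le>r. \<Sum>q\<le>a. \<Sum>j\<le>min (a-q) (r-i). FL i q j)"
    unfolding Lm_rho L1_sum L1_scale L1_rho scale_sum_right homog_act.IH rho_sum rho_scale FL_def
    by (intro sum.cong refl) (simp add: mult_ac diff_diff_add)
  also have "\<dots> = (\<Sum>i\<le>r. \<Sum>q\<le>a. \<Sum>j\<le>min (a-q) (r-i).
      sc ((-1)^i * ibinom p i * ibinom (int i - p) q * ((-1)^j * ibinom (W + int i - int q) j)) (T (i+j) (q+j)))"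
    by (intro sum.cong refl) (rule FL_eq)
  also have "\<dots> = (\<Sum>j\<le>min a r. \<Sum>q\<le>a-j. \<Sum>i\<le>r-j.
      sc ((-1)^j * ibinom (W + 2*p) j * ibinom (-p) q * ((-1)^i * ibinom (p + int q) i)) (T (i+j) (q+j)))"
    by (rule sum_regroup_L1_Lm)
  also have "\<dots> = (\<Sum>j\<le>min a r. \<Sum>q\<le>a-j. \<Sum>i\<le>r-j. FR i q j)"
    by (simp only: FR_eq)
  also have "\<dots> = (\<Sum>j\<le>min a r. sc ((-1)^j * ibinom (int a - 2*(e+s) - int r) j) (Lm (r-j) (L1 (a-j) (rho c p y))))"
    unfolding L1_rho Lm_sum Lm_scale Lm_rho scale_sum_right FR_def
    by (intro sum.cong refl) (simp add: mult_ac diff_diff_add)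
  finally show ?case
    unfolding p_def .
qed (simp_all add: L1_zero Lm_zero L1_add Lm_add L1_scale Lm_scale scale_right_distrib
    sum.distrib scale_sum_right mult.commute)
text \<open>\<open>L1_Y_expansion d v n a w\<close> is the coefficient of \<open>z^a z_0^{-n-1}\<close> in
  \<open>Y(e^{z(1 - z z_0) L_1} (1 - z z_0)^{-2d} v, z_0/(1 - z z_0)) e^{z L_1} w\<close> for \<open>v\<close> of degree
  \<open>d\<close>, with \<open>(-1)^j binom(k - 2d + n + j + 1, j)\<close> rewritten as \<open>binom(2d - k - n - 2, j)\<close>.
  Lemma \<open>L1_Y\<close> identifies it with the corresponding coefficient \<open>L_1^{(a)} Y(v,n) w\<close> of
  \<open>e^{z L_1} Y(v, z_0) w\<close>.\<close>
definition L1_Y_expansion :: "int \<Rightarrow> 'v \<Rightarrow> int \<Rightarrow> nat \<Rightarrow> 'v \<Rightarrow> 'v" where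
  "L1_Y_expansion d v n a w = (\<Sum>k\<le>a. \<Sum>j\<le>a-k.
     sc (ibinom (2*d - int k - n - 2) j) (Y (L1 k v) (n + int j) (L1 (a-k-j) w)))"

lemma L1_Y_expansion_add:
  "L1_Y_expansion d v n a (x + y) = L1_Y_expansion d v n a x + L1_Y_expansion d v n a y"
  unfolding L1_Y_expansion_def by (simp add: L1_add Y_add_right scale_right_distrib sum.distrib)

lemma L1_Y_expansion_scale: "L1_Y_expansion d v n a (sc k x) = sc k (L1_Y_expansion d v n a x)"
  unfolding L1_Y_expansion_def by (simp add: L1_scale Y_scale_right scale_sum_right mult_ac)

lemma L1_Y_expansion_vacuum:
  assumes v: "homogeneous d v"
  shows "L1 a (Y v n one) = L1_Y_expansion d v n a one"
proof -
  have expansion: "L1_Y_expansion d v n a one =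
      (\<Sum>k\<le>a. sc (ibinom (2*d - int k - n - 2) (a-k)) (Y (L1 k v) (n + int (a-k)) one))"
    unfolding L1_Y_expansion_def
    by (intro sum.cong refl, subst sum_atMost_only_last) (auto simp: L1_one Y_zero_right)
  show ?thesis
  proof (cases "n \<ge> 0")
    case True
    then show ?thesis
      unfolding expansion by (simp add: Y_creation L1_zero)
  next
    case False
    define r where "r = nat (- n - 1)"
    have n: "n = - int r - 1"
      using False r_def by simp
    have "L1 a (Y v n one) =
        (\<Sum>j\<le>min a r. sc ((-1)^j * ibinom (int a - 2*d - int r) j) (Lm (r-j) (L1 (a-j) v)))"
      unfolding n Lm_eq_Y[symmetric] by (rule L1_Lm[OF v])
    also have "\<dots> = (\<Sum>j\<le>a. sc (ibinom (2*d - int (a-j) - n - 2) j) (Y (L1 (a-j) v) (n + int j) one))"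
    proof (rule sum.mono_neutral_cong_left)
      fix j assume j: "j \<in> {..min a r}"
      then have "- int (r - j) - 1 = n + int j" "int j - (int a - 2*d - int r) - 1 = 2*d - int (a-j) - n - 2"
        using n by auto
      then show "sc ((-1)^j * ibinom (int a - 2*d - int r) j) (Lm (r-j) (L1 (a-j) v)) =
          sc (ibinom (2*d - int (a-j) - n - 2) j) (Y (L1 (a-j) v) (n + int j) one)"
        by (simp only: Lm_eq_Y ibinom_negated_upper)
    qed (use n in \<open>auto simp: Y_creation\<close>)
    also have "\<dots> = L1_Y_expansion d v n a one"
      unfolding expansion by (subst sum_atMost_reverse) simp
    finally show ?thesis .
  qed
qed

lemma L1_Y_expansion_rho:
  assumes v: "homogeneous d v" and dD: "d \<le> int D"
  shows "L1_Y_expansion d v n a (rho c p x) =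
    (\<Sum>k\<le>a. \<Sum>j\<le>a-k. \<Sum>q\<le>a-k-j. sc (ibinom (2*d - int k - n - 2) j * ibinom (-p) q)
       (rho c (p + int q) (Y (L1 k v) (n + int j) (L1 (a-k-j-q) x)))) -
    (\<Sum>k\<le>a. \<Sum>j\<le>a-k. \<Sum>q\<le>a-k-j. \<Sum>i\<le>D+a.
       sc (ibinom (2*d - int k - n - 2) j * ibinom (-p) q * ibinom (p + int q) i)
         (Y (rho c (int i) (L1 k v)) (p + int q + (n + int j) - int i) (L1 (a-k-j-q) x)))"
    (is "_ = ?rhs")
proof -
  have commute: "Y (L1 k v) m (rho c p' z) = rho c p' (Y (L1 k v) m z) -
      (\<Sum>i\<le>D+a. sc (ibinom p' i) (Y (rho c (int i) (L1 k v)) (p' + m - int i) z))" if "k \<le> a" for k m p' z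
    using that dD by (intro Y_rho_right[OF L1_homogeneous[OF v]]) auto
  have "L1_Y_expansion d v n a (rho c p x) = (\<Sum>k\<le>a. \<Sum>j\<le>a-k. \<Sum>q\<le>a-k-j.
      sc (ibinom (2*d - int k - n - 2) j * ibinom (-p) q)
        (Y (L1 k v) (n + int j) (rho c (p + int q) (L1 (a-k-j-q) x))))"
    unfolding L1_Y_expansion_def L1_rho Y_sum_right Y_scale_right scale_sum_right by simp
  also have "\<dots> = ?rhs"
    by (simp add: commute scale_right_diff_distrib scale_sum_right sum_subtractf)
  finally show ?thesis .
qed

lemma L1_Y:
  "generated_by_vac sc rho one w \<Longrightarrow> homogeneous d v \<Longrightarrow> L1 a (Y v n w) = L1_Y_expansion d v n a w"
proof (induction arbitrary: d v n a rule: generated_by_vac.induct)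
  case (gen_act x c p)
  note v = gen_act.prems
  define D where "D = nat d"
  have dD: "d \<le> int D"
    unfolding D_def by simp
  define C where "C k j = (ibinom (2*d - int k - n - 2) j :: 'k)" for k j
  define TB where "TB I K J T = Y (rho c (int I) (L1 K v)) (p + n - int I + int J) (L1 T x)" for I K J T
  have vanish: "TB I K J T = 0" if "D < I" for I K J T
    using that dD rho_above_degree[OF L1_homogeneous[OF v], of K I c] unfolding TB_def
    by (simp add: Y_zero_left)
  have "L1 a (rho c p (Y v n x)) = (\<Sum>q\<le>a. \<Sum>k\<le>a-q. \<Sum>j\<le>a-q-k.
      sc (C k j * ibinom (-p) q) (rho c (p + int q) (Y (L1 k v) (n + int j) (L1 (a-k-j-q) x))))"
    unfolding L1_rho gen_act.IH[OF v] L1_Y_expansion_def rho_sum rho_scale scale_sum_right C_def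
    by (simp add: mult_ac add_ac)
  also have "\<dots> = (\<Sum>k\<le>a. \<Sum>j\<le>a-k. \<Sum>q\<le>a-k-j.
      sc (C k j * ibinom (-p) q) (rho c (p + int q) (Y (L1 k v) (n + int j) (L1 (a-k-j-q) x))))"
    by (rule sum_simplex_rotate)
  finally have main_part: "L1 a (rho c p (Y v n x)) = \<dots>" .
  have "(\<Sum>i\<le>D. sc (ibinom p i) (L1 a (Y (rho c (int i) v) (p + n - int i) x))) =
      (\<Sum>i\<le>D. \<Sum>k\<le>a. \<Sum>j\<le>a-k. \<Sum>q\<le>k.
        sc (ibinom p i * ibinom (2*d - n - 2 - int k - int i - p) j * ibinom (- int i) q)
          (TB (i+q) (k-q) (j+q) (a-k-j)))"
  proof (rule sum.cong[OF refl])
    fix i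
    have "2*(d - int i) - int k - (p + n - int i) - 2 = 2*d - n - 2 - int k - int i - p" for k
      by simp
    moreover have "p + n - int (i+q) + int (j+q) = p + n - int i + int j" for j q
      by simp
    ultimately show "sc (ibinom p i) (L1 a (Y (rho c (int i) v) (p + n - int i) x)) =
      (\<Sum>k\<le>a. \<Sum>j\<le>a-k. \<Sum>q\<le>k.
        sc (ibinom p i * ibinom (2*d - n - 2 - int k - int i - p) j * ibinom (- int i) q)
          (TB (i+q) (k-q) (j+q) (a-k-j)))"
      unfolding gen_act.IH[OF rho_homogeneous[OF v]] L1_Y_expansion_def L1_rho TB_def
        Y_sum_left Y_scale_left scale_sum_right
      by (simp only: scale_scale mult.assoc of_nat_add)
  qed
  also have "\<dots> = (\<Sum>k\<le>a. \<Sum>j\<le>a-k. \<Sum>q\<le>a-k-j. \<Sum>i\<le>D+a.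
      sc (ibinom (2*d - n - 2 - int k) j * ibinom (-p) q * ibinom (p + int q) i) (TB i k (j+q) (a-k-j-q)))"
    using vanish by (rule sum_regroup_L1_Y)
  finally have commutator_part: "(\<Sum>i\<le>D. sc (ibinom p i) (L1 a (Y (rho c (int i) v) (p + n - int i) x))) =
      (\<Sum>k\<le>a. \<Sum>j\<le>a-k. \<Sum>q\<le>a-k-j. \<Sum>i\<le>D+a.
        sc (C k j * ibinom (-p) q * ibinom (p + int q) i)
          (Y (rho c (int i) (L1 k v)) (p + int q + (n + int j) - int i) (L1 (a-k-j-q) x)))"
    unfolding TB_def C_def by (simp add: algebra_simps)
  have "L1 a (Y v n (rho c p x)) =
      L1 a (rho c p (Y v n x)) - (\<Sum>i\<le>D. sc (ibinom p i) (L1 a (Y (rho c (int i) v) (p + n - int i) x)))"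
    unfolding Y_rho_right[OF v dD] L1_diff L1_sum L1_scale ..
  then show ?case
    unfolding main_part commutator_part L1_Y_expansion_rho[OF v dD] C_def .
qed (simp_all add: L1_Y_expansion_vacuum Y_add_right L1_add L1_Y_expansion_add
    Y_scale_right L1_scale L1_Y_expansion_scale)

lemma L1_0_eq_id: "L1 0 w = w"
  using generated[of w]
  by (induction rule: generated_by_vac.induct) (simp_all add: L1_one L1_add L1_scale L1_rho)

lemma L1_conjugation:
  assumes v: "homogeneous d v"
  shows "(\<Sum>k\<le>a. sc ((-1) ^ k) (L1 (a - k) (Y v (- b - 1) (L1 k w)))) =
    (\<Sum>k\<le>a. sc ((-1) ^ (a - k) * ibinom (int k - 2 * d + (int a - int k - b - 1) + 1) (a - k))
       (Y (L1 k v) (int a - int k - b - 1) w))"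
proof -
  define n where "n = - b - 1"
  define C where "C k j = (ibinom (2*d - int k - n - 2) j :: 'k)" for k j
  define F where "F q k j = sc ((-1)^q * of_nat ((a - k - j) choose (a - k - j - q)) * C k j)
     (Y (L1 k v) (n + int j) (L1 (a - k - j) w))" for q k j
  have "(\<Sum>k\<le>a. sc ((-1) ^ k) (L1 (a - k) (Y v (- b - 1) (L1 k w)))) =
      (\<Sum>q\<le>a. \<Sum>k\<le>a-q. \<Sum>j\<le>a-q-k. F q k j)"
  proof (rule sum.cong[OF refl])
    fix q assume q: "q \<in> {..a}"
    show "sc ((-1) ^ q) (L1 (a - q) (Y v (- b - 1) (L1 q w))) = (\<Sum>k\<le>a-q. \<Sum>j\<le>a-q-k. F q k j)"
      unfolding L1_Y[OF generated v] L1_Y_expansion_def scale_sum_right n_def[symmetric]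
    proof (intro sum.cong refl)
      fix k j assume "k \<in> {..a-q}" "j \<in> {..a-q-k}"
      then have "a - q - k - j + q = a - k - j"
        using q by auto
      then show "sc ((-1) ^ q) (sc (ibinom (2*d - int k - n - 2) j)
          (Y (L1 k v) (n + int j) (L1 (a - q - k - j) (L1 q w)))) = F q k j"
        unfolding L1_L1 F_def C_def by (simp add: Y_scale_right mult_ac add_ac)
    qed
  qed
  also have "\<dots> = (\<Sum>k\<le>a. \<Sum>j\<le>a-k. \<Sum>q\<le>a-k-j. F q k j)"
    by (rule sum_simplex_rotate)
  also have "\<dots> = (\<Sum>k\<le>a. \<Sum>j\<le>a-k. sc (if a - k - j = 0 then C k j else 0) (Y (L1 k v) (n + int j) w))"
    unfolding F_def scale_sum_left[symmetric] sum_distrib_right[symmetric] alternating_sum_choose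
    by (intro sum.cong refl) (auto simp: L1_0_eq_id)
  also have "\<dots> = (\<Sum>k\<le>a. sc (C k (a - k)) (Y (L1 k v) (n + int (a - k)) w))"
    by (intro sum.cong refl, subst sum_atMost_only_last) auto
  also have "\<dots> = (\<Sum>k\<le>a. sc ((-1) ^ (a - k) * ibinom (int k - 2 * d + (int a - int k - b - 1) + 1) (a - k))
      (Y (L1 k v) (int a - int k - b - 1) w))"
  proof (rule sum.cong[OF refl])
    fix k assume "k \<in> {..a}"
    then have "n + int (a - k) = int a - int k - b - 1"
      "int (a - k) - (int k - 2 * d + (int a - int k - b - 1) + 1) - 1 = 2*d - int k - n - 2"
      unfolding n_def by auto
    then show "sc (C k (a - k)) (Y (L1 k v) (n + int (a - k)) w) =
      sc ((-1) ^ (a - k) * ibinom (int k - 2 * d + (int a - int k - b - 1) + 1) (a - k))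
        (Y (L1 k v) (int a - int k - b - 1) w)"
      unfolding C_def by (simp only: ibinom_negated_upper)
  qed
  finally show ?thesis .
qed

lemma graded_direct_homogeneous: "graded_direct sc (\<lambda>d. {v. homogeneous d v})"
  unfolding graded_direct_def
  using homogeneous_decomposition homogeneous_sum_eq_0
  by (auto intro: homog.homog_zero homog.homog_add homog.homog_scale)

lemma H_module_VA_vacuum: "H_module_VA sc Y one (\<lambda>d. {v. homogeneous d v}) Lm L0 L1"
  unfolding H_module_VA_def Z_graded_VA_def graded_weight_H_def
proof (intro conjI allI impI exI[of _ 0])
  show "vertex_algebra sc Y one"
    by (rule vertex_alg)
  show "Lm r v = Y v (- int r - 1) one" for r v
    by (rule Lm_eq_Y)
  show "L1 r one = (if r = 0 then one else 0)" for r
    by (rule L1_one)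
  show "{v. homogeneous n v} = {0}" if "n < 0" for n
    using that homogeneous_negative_degree by (auto intro: homog.homog_zero)
  fix d v w a b
  assume "v \<in> {v. homogeneous d v}"
  then show "(\<Sum>k\<le>a. sc ((-1) ^ k) (L1 (a - k) (Y v (- b - 1) (L1 k w)))) =
      (\<Sum>k\<le>a. sc ((-1) ^ (a - k) * ibinom (int k - 2 * d + (int a - int k - b - 1) + 1) (a - k))
        (Y (L1 k v) (int a - int k - b - 1) w))"
    by (simp add: L1_conjugation)
qed (use graded_direct_homogeneous Y_homogeneous L1_homogeneous L0_homogeneous
      Y_homogeneous[OF _ homog.homog_one, of _ v "- int r - 1" for v r] in
    \<open>auto simp: Lm_eq_Y intro: homog.homog_one\<close>)

end

theorem proposition5p2:
  fixes p :: nat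
    and scg :: "'k::field \<Rightarrow> 'g::ab_group_add \<Rightarrow> 'g"
    and br :: "'g \<Rightarrow> 'g \<Rightarrow> 'g" and fm :: "'g \<Rightarrow> 'g \<Rightarrow> 'k" and ell :: 'k
    and sc :: "'k \<Rightarrow> 'v::ab_group_add \<Rightarrow> 'v"
    and rho :: "'g \<Rightarrow> int \<Rightarrow> 'v \<Rightarrow> 'v" and one :: 'v
    and Y :: "'v \<Rightarrow> int \<Rightarrow> 'v \<Rightarrow> 'v"
    and Lm L0 L1 :: "nat \<Rightarrow> 'v \<Rightarrow> 'v"
  assumes "prime p" and "odd p" and "of_nat p = (0::'k)" and "alg_closed TYPE('k)"
    and "lie_alg_form scg br fm"
    and "affine_vacuum_module scg br fm ell sc rho one"
    and "vertex_algebra sc Y one"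
    and "\<forall>a n w. Y (rho a (-1) one) n w = rho a n w"
    and "H_action_induced sc rho one Lm L0 L1"
  shows "H_module_VA sc Y one (\<lambda>d. {v. homog sc rho one d v}) Lm L0 L1"
proof -
  interpret affine_vacuum_vertex_algebra scg br fm ell sc rho one Y Lm L0 L1
    using assms(6-9) by unfold_locales blast+
  show ?thesis
    by (rule H_module_VA_vacuum)
qed

end
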